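(* Fix a time $t$ and let $r>0$. There exists an integer $n_o(r)>0$ such that for every integer $n\ge n_o(r)$ and every $v\in X_r$, the equation $$\sqrt n\,u-\frac{1}{p^0}Q(u,u)=v$$ has a unique solution $u_n\in X_r$.
   Context: $a,b$ are given regular positive functions of $t$ with $a(t)>C_o$, $b(t)>C_o$ ($C_o>0$). For $\bar p=(p^1,p^2,p^3),\bar q\in\mathbb{R}^3$: $\bar p\cdot\bar q=a^2(t)p^1q^1+b^2(t)(p^2q^2+p^3q^3)$, $|\bar p|^2=\bar p\cdot\bar p$, $p^0=\sqrt{1+|\bar p|^2}$, $q^0=\sqrt{1+|\bar q|^2}$, $\hat{\bar p}=\bar p/p^0$, $e=p^0+q^0$; for $\omega\in S^2$, $C(\bar p,\bar q,\omega)=\dfrac{2p^0q^0e\,\omega\cdot(\hat{\bar q}-\hat{\bar p})}{e^2-[\omega\cdot(\bar p+\bar q)]^2}$, $\bar p'=\bar p+C\omega$, $\bar q'=\bar q-C\omega$. The kernel $S(a(t),b(t),\bar p,\bar q,\bar p',\bar q')$ satisfies $0\le S\le C_1$ and $S(a,b,\bar p,\bar q,\bar p',\bar q')=S(a,b,\bar p',\bar q',\bar p,\bar q)$. $Q^+(f,g)(\bar p)=\int_{\mathbb{R}^3}\frac{a(t)b^2(t)}{q^0}d\bar q\int_{S^2}f(\bar p')g(\bar q')S\,d\omega$, $Q^-(f,g)(\bar p)=\int_{\mathbb{R}^3}\frac{a(t)b^2(t)}{q^0}d\bar q\int_{S^2}f(\bar p)g(\bar q)S\,d\omega$, $Q=Q^+-Q^-$.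 $\|\cdot\|$ is the $L^1(\mathbb{R}^3)$ norm and $X_r=\{f\in L^1(\mathbb{R}^3): f\ge0\text{ a.e.},\ \|f\|\le r\}$. *)

theory Defs
  imports "HOL-Analysis.Analysis"
begin

type_synonym vec3 = "real ^ 3"

definition dotm :: "real \<Rightarrow> real \<Rightarrow> vec3 \<Rightarrow> vec3 \<Rightarrow> real" where
  "dotm a b p q = a\<^sup>2 * (p $ 1) * (q $ 1) + b\<^sup>2 * ((p $ 2) * (q $ 2) + (p $ 3) * (q $ 3))"

definition nrm2 :: "real \<Rightarrow> real \<Rightarrow> vec3 \<Rightarrow> real" where
  "nrm2 a b p = dotm a b p p"

definition p0 :: "real \<Rightarrow> real \<Rightarrow> vec3 \<Rightarrow> real" where
  "p0 a b p = sqrt (1 + nrm2 a b p)"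

definition hat :: "real \<Rightarrow> real \<Rightarrow> vec3 \<Rightarrow> vec3" where
  "hat a b p = (1 / p0 a b p) *\<^sub>R p"

definition Ccoll :: "real \<Rightarrow> real \<Rightarrow> vec3 \<Rightarrow> vec3 \<Rightarrow> vec3 \<Rightarrow> real" where
  "Ccoll a b p q w =
     (let e = p0 a b p + p0 a b q in
      2 * p0 a b p * p0 a b q * e * dotm a b w (hat a b q - hat a b p)
        / (e\<^sup>2 - (dotm a b w (p + q))\<^sup>2))"

definition pprime :: "real \<Rightarrow> real \<Rightarrow> vec3 \<Rightarrow> vec3 \<Rightarrow> vec3 \<Rightarrow> vec3" where
  "pprime a b p q w = p + Ccoll a b p q w *\<^sub>R w"

definition qprime :: "real \<Rightarrow> real \<Rightarrow> vec3 \<Rightarrow> vec3 \<Rightarrow> vec3 \<Rightarrow> vec3" where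
  "qprime a b p q w = q - Ccoll a b p q w *\<^sub>R w"

text \<open>Points of S^2 are unit vectors for the metric scalar product dotm a b.  They are
  parametrised by the standard Euclidean unit sphere via an orthonormal frame,
  n = (sin th cos ph, sin th sin ph, cos th) gives
  omega = (n1/a, n2/b, n3/b), and d omega is the standard surface measure
  sin th d th d ph.\<close>
definition sph :: "real \<Rightarrow> real \<Rightarrow> real \<Rightarrow> real \<Rightarrow> vec3" where
  "sph a b th ph = vector [sin th * cos ph / a, sin th * sin ph / b, cos th / b]"

definition sphere_int :: "real \<Rightarrow> real \<Rightarrow> (vec3 \<Rightarrow> real) \<Rightarrow> real" where
  "sphere_int a b g =
     (LINT th:{0..pi}|lborel. (LINT ph:{0..2*pi}|lborel. sin th * g (sph a b th ph)))"

type_synonym kernel = "real \<Rightarrow> real \<Rightarrow> vec3 \<Rightarrow> vec3 \<Rightarrow> vec3 \<Rightarrow> vec3 \<Rightarrow> real"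

definition Qplus :: "kernel \<Rightarrow> real \<Rightarrow> real \<Rightarrow> (vec3 \<Rightarrow> real) \<Rightarrow> (vec3 \<Rightarrow> real) \<Rightarrow> vec3 \<Rightarrow> real" where
  "Qplus S a b f g p =
     (LINT q|lborel. (a * b\<^sup>2 / p0 a b q) *
        sphere_int a b (\<lambda>w. f (pprime a b p q w) * g (qprime a b p q w)
                              * S a b p q (pprime a b p q w) (qprime a b p q w)))"

definition Qminus :: "kernel \<Rightarrow> real \<Rightarrow> real \<Rightarrow> (vec3 \<Rightarrow> real) \<Rightarrow> (vec3 \<Rightarrow> real) \<Rightarrow> vec3 \<Rightarrow> real" where
  "Qminus S a b f g p =
     (LINT q|lborel. (a * b\<^sup>2 / p0 a b q) *
        sphere_int a b (\<lambda>w. f p * g q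
                              * S a b p q (pprime a b p q w) (qprime a b p q w)))"

definition Qcoll :: "kernel \<Rightarrow> real \<Rightarrow> real \<Rightarrow> (vec3 \<Rightarrow> real) \<Rightarrow> (vec3 \<Rightarrow> real) \<Rightarrow> vec3 \<Rightarrow> real" where
  "Qcoll S a b f g p = Qplus S a b f g p - Qminus S a b f g p"

definition L1norm :: "(vec3 \<Rightarrow> real) \<Rightarrow> real" where
  "L1norm f = (LINT p|lborel. \<bar>f p\<bar>)"

definition Xr :: "real \<Rightarrow> (vec3 \<Rightarrow> real) set" where
  "Xr r = {f. integrable lborel f \<and> (AE p in lborel. f p \<ge> 0) \<and> L1norm f \<le> r}"

definition solves :: "kernel \<Rightarrow> real \<Rightarrow> real \<Rightarrow> nat \<Rightarrow> (vec3 \<Rightarrow> real) \<Rightarrow> (vec3 \<Rightarrow> real) \<Rightarrow> bool" where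
  "solves S a b n v u \<longleftrightarrow>
     (AE p in lborel. sqrt (real n) * u p - Qcoll S a b u u p / p0 a b p = v p)"

end

theory Submission
  imports Defs
begin

(* Write Q = Q+ - Q-, where Q-(u,u) = u nu(u) is a multiplication operator.  For every direction w
   the collision map (p, q) |-> (p', q') is an involution which, on each fibre p + q = s, has Jacobian
   p'^0 q'^0 / (p^0 q^0); together with the symmetry of S this gives the L^1 bounds
   ||Q+(f,g) / p^0|| <= kappa ||f|| ||g|| and |nu(g)| <= kappa ||g||, with kappa = a b^2 2 pi^2 C_1.
   Subtracting two solutions in X_r then forces them to agree once sqrt n > 4 kappa r.  Solutions are
   the fixed points of Phi(u) = (v + Q+(u,u)/p^0) / (sqrt n + nu(u)/p^0), which maps X_r into itself
   and is a 1/2-contraction in L^1 once sqrt n >= 1 + 6 kappa r + 2 kappa^2 r^2; its iterates from 0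
   converge in L^1 and almost everywhere. *)

lemma measurable_compose_uncurry2:
  fixes H :: "'a::second_countable_topology \<Rightarrow> 'b::second_countable_topology \<Rightarrow> 'c::topological_space"
  assumes "(\<lambda>(x, y). H x y) \<in> borel_measurable borel"
    and [measurable]: "f \<in> borel_measurable M" "g \<in> borel_measurable M"
  shows "(\<lambda>x. H (f x) (g x)) \<in> borel_measurable M"
proof -
  have "(\<lambda>x. (\<lambda>(x, y). H x y) (f x, g x)) \<in> borel_measurable M"
    by (rule measurable_compose[OF _ assms(1)]) (unfold borel_prod[symmetric], measurable)
  then show ?thesis by simp
qed

lemma measurable_compose_uncurry3:
  fixes H :: "'a::second_countable_topology \<Rightarrow> 'b::second_countable_topology \<Rightarrow>
    'c::second_countable_topology \<Rightarrow> 'd::topological_space"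
  assumes "(\<lambda>(x, y, z). H x y z) \<in> borel_measurable borel"
    and [measurable]: "f \<in> borel_measurable M" "g \<in> borel_measurable M" "h \<in> borel_measurable M"
  shows "(\<lambda>x. H (f x) (g x) (h x)) \<in> borel_measurable M"
proof -
  have "(\<lambda>x. (\<lambda>(x, y, z). H x y z) (f x, g x, h x)) \<in> borel_measurable M"
    by (rule measurable_compose[OF _ assms(1)]) (unfold borel_prod[symmetric], measurable)
  then show ?thesis by simp
qed

lemma measurable_compose_uncurry4:
  fixes H :: "'a::second_countable_topology \<Rightarrow> 'b::second_countable_topology \<Rightarrow>
    'c::second_countable_topology \<Rightarrow> 'd::second_countable_topology \<Rightarrow> 'e::topological_space"
  assumes "(\<lambda>(x, y, z, u). H x y z u) \<in> borel_measurable borel"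
    and [measurable]: "f \<in> borel_measurable M" "g \<in> borel_measurable M" "h \<in> borel_measurable M"
      "k \<in> borel_measurable M"
  shows "(\<lambda>x. H (f x) (g x) (h x) (k x)) \<in> borel_measurable M"
proof -
  have "(\<lambda>x. (\<lambda>(x, y, z, u). H x y z u) (f x, g x, h x, k x)) \<in> borel_measurable M"
    by (rule measurable_compose[OF _ assms(1)]) (unfold borel_prod[symmetric], measurable)
  then show ?thesis by simp
qed

lemma abs_integral_le_nn_integral:
  fixes f :: "'a \<Rightarrow> real"
  shows "ennreal \<bar>integral\<^sup>L M f\<bar> \<le> (\<integral>\<^sup>+x. ennreal \<bar>f x\<bar> \<partial>M)"
proof (cases "integrable M f")
  case True
  then show ?thesis using integral_norm_bound_ennreal[OF True] by simp
qed (simp add: not_integrable_integral_eq)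

lemma nn_integral_shear:
  fixes G :: "'a::euclidean_space \<Rightarrow> 'a \<Rightarrow> ennreal"
  assumes G: "(\<lambda>(x, y). G x y) \<in> borel_measurable borel"
  shows "(\<integral>\<^sup>+p. \<integral>\<^sup>+q. G p q \<partial>lborel \<partial>lborel) = (\<integral>\<^sup>+s. \<integral>\<^sup>+p. G p (s - p) \<partial>lborel \<partial>lborel)"
proof -
  note G' [measurable] = measurable_compose_uncurry2[OF G]
  have translate: "(\<integral>\<^sup>+q. G p q \<partial>lborel) = (\<integral>\<^sup>+s. G p (s - p) \<partial>lborel)" for p
  proof -
    have "(\<integral>\<^sup>+q. G p q \<partial>lborel) = (\<integral>\<^sup>+q. G p q \<partial>distr lborel borel ((+) (-p)))"
      by (simp add: lborel_distr_plus)
    also have "\<dots> = (\<integral>\<^sup>+s. G p (-p + s) \<partial>lborel)"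
      by (rule nn_integral_distr) measurable
    finally show ?thesis by simp
  qed
  have "(\<lambda>(p, s). G p (s - p)) \<in> borel_measurable (lborel \<Otimes>\<^sub>M lborel)"
    unfolding case_prod_beta by measurable
  then show ?thesis
    unfolding translate by (rule lborel_pair.Fubini'[symmetric])
qed

lemma nn_integral_eq_if_same_has_integral:
  fixes g h :: "'a::euclidean_space \<Rightarrow> real"
  assumes g: "g \<in> borel_measurable borel" "\<And>x. 0 \<le> g x"
    and h: "h \<in> borel_measurable borel" "\<And>x. 0 \<le> h x"
    and gh: "\<And>b. (g has_integral b) UNIV \<longleftrightarrow> (h has_integral b) UNIV"
  shows "(\<integral>\<^sup>+x. ennreal (g x) \<partial>lborel) = (\<integral>\<^sup>+x. ennreal (h x) \<partial>lborel)"
proof -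
  have finite_case: "(\<integral>\<^sup>+x. ennreal (h x) \<partial>lborel) = (\<integral>\<^sup>+x. ennreal (g x) \<partial>lborel)"
    if g: "g \<in> borel_measurable borel" "\<And>x. 0 \<le> g x" "(\<integral>\<^sup>+x. ennreal (g x) \<partial>lborel) < \<infinity>"
      and h: "h \<in> borel_measurable borel" "\<And>x. 0 \<le> h x"
      and gh: "\<And>b. (g has_integral b) UNIV \<longleftrightarrow> (h has_integral b) UNIV"
    for g h :: "'a \<Rightarrow> real"
  proof -
    have "(g has_integral integral UNIV g) UNIV"
      using nn_integral_integrable_on[OF g] by (simp add: integrable_integral)
    then have "(h has_integral integral UNIV g) UNIV" using gh by blast
    then show ?thesis
      using nn_integral_has_integral_lborel[OF h] nn_integral_lborel_eq_integral[OF g] by simp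
  qed
  show ?thesis
  proof (cases "(\<integral>\<^sup>+x. ennreal (g x) \<partial>lborel) < \<infinity>")
    case True
    then show ?thesis by (rule finite_case[OF g _ h gh, symmetric])
  next
    case False
    show ?thesis
    proof (cases "(\<integral>\<^sup>+x. ennreal (h x) \<partial>lborel) < \<infinity>")
      case True
      then show ?thesis by (rule finite_case[OF h _ g]) (use gh in blast)
    qed (use False in \<open>simp add: less_top[symmetric]\<close>)
  qed
qed

lemma nn_integral_involution:
  fixes \<tau> :: "real^'n::{finite,wellorder} \<Rightarrow> real^'n::_" and f :: "real^'n::_ \<Rightarrow> real"
  assumes inv: "\<And>x. \<tau> (\<tau> x) = x"
    and der: "\<And>x. (\<tau> has_derivative \<tau>' x) (at x)"
    and f: "f \<in> borel_measurable borel" "\<And>x. 0 \<le> f x"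
    and Jf: "(\<lambda>x. \<bar>det (matrix (\<tau>' x))\<bar> * f (\<tau> x)) \<in> borel_measurable borel"
  shows "(\<integral>\<^sup>+x. ennreal (\<bar>det (matrix (\<tau>' x))\<bar> * f (\<tau> x)) \<partial>lborel) = (\<integral>\<^sup>+x. ennreal (f x) \<partial>lborel)"
proof (rule nn_integral_eq_if_same_has_integral[OF Jf _ f])
  have "\<tau>' (\<tau> y) \<circ> \<tau>' y = id" for y
  proof -
    have "((\<tau> \<circ> \<tau>) has_derivative (\<tau>' (\<tau> y) \<circ> \<tau>' y)) (at y)"
      by (rule diff_chain_at[OF der der])
    moreover have "\<tau> \<circ> \<tau> = id" using inv by (simp add: fun_eq_iff)
    ultimately show ?thesis
      using has_derivative_unique has_derivative_id by (metis id_def)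
  qed
  then have "\<tau>' y \<circ> \<tau>' (\<tau> y) = id" for y using inv by metis
  then show "((\<lambda>x. \<bar>det (matrix (\<tau>' x))\<bar> * f (\<tau> x)) has_integral b) UNIV \<longleftrightarrow> (f has_integral b) UNIV"
    for b by (intro cov_invertible_nonneg_eq[where h=\<tau> and h'=\<tau>']) (use der f(2) inv in auto)
qed (use f(2) in simp)

lemma nn_integral_commute_pairs:
  fixes X :: "'a::euclidean_space \<Rightarrow> 'b::euclidean_space \<Rightarrow> 'c::euclidean_space \<Rightarrow>
    'd::euclidean_space \<Rightarrow> ennreal"
  assumes X: "(\<lambda>(p, q, x, y). X p q x y) \<in> borel_measurable borel"
  shows "(\<integral>\<^sup>+p. \<integral>\<^sup>+q. \<integral>\<^sup>+x. \<integral>\<^sup>+y. X p q x y \<partial>lborel \<partial>lborel \<partial>lborel \<partial>lborel)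
       = (\<integral>\<^sup>+x. \<integral>\<^sup>+y. \<integral>\<^sup>+p. \<integral>\<^sup>+q. X p q x y \<partial>lborel \<partial>lborel \<partial>lborel \<partial>lborel)"
proof -
  note [measurable (raw)] = measurable_compose_uncurry4[OF X]
  have 1: "(\<integral>\<^sup>+q. \<integral>\<^sup>+x. \<integral>\<^sup>+y. X p q x y \<partial>lborel \<partial>lborel \<partial>lborel)
      = (\<integral>\<^sup>+x. \<integral>\<^sup>+q. \<integral>\<^sup>+y. X p q x y \<partial>lborel \<partial>lborel \<partial>lborel)" for p
    by (rule lborel_pair.Fubini'[symmetric]) measurable
  have 2: "(\<integral>\<^sup>+q. \<integral>\<^sup>+y. X p q x y \<partial>lborel \<partial>lborel) = (\<integral>\<^sup>+y. \<integral>\<^sup>+q. X p q x y \<partial>lborel \<partial>lborel)"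
    for p x
    by (rule lborel_pair.Fubini'[symmetric]) measurable
  have 3: "(\<integral>\<^sup>+p. \<integral>\<^sup>+x. \<integral>\<^sup>+y. \<integral>\<^sup>+q. X p q x y \<partial>lborel \<partial>lborel \<partial>lborel \<partial>lborel)
      = (\<integral>\<^sup>+x. \<integral>\<^sup>+p. \<integral>\<^sup>+y. \<integral>\<^sup>+q. X p q x y \<partial>lborel \<partial>lborel \<partial>lborel \<partial>lborel)"
    by (rule lborel_pair.Fubini'[symmetric]) measurable
  have 4: "(\<integral>\<^sup>+p. \<integral>\<^sup>+y. \<integral>\<^sup>+q. X p q x y \<partial>lborel \<partial>lborel \<partial>lborel)
      = (\<integral>\<^sup>+y. \<integral>\<^sup>+p. \<integral>\<^sup>+q. X p q x y \<partial>lborel \<partial>lborel \<partial>lborel)" for x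
    by (rule lborel_pair.Fubini'[symmetric]) measurable
  show ?thesis by (simp add: 1 2 3 4)
qed

lemma integral_iterated3_eq_product:
  fixes Z :: "'a::euclidean_space \<Rightarrow> 'b::euclidean_space \<Rightarrow> 'c::euclidean_space \<Rightarrow> real"
  assumes Z: "(\<lambda>(q, x, y). Z q x y) \<in> borel_measurable borel"
    and int: "integrable (lborel \<Otimes>\<^sub>M (lborel \<Otimes>\<^sub>M lborel)) (\<lambda>(q, x, y). Z q x y)"
  shows "(LINT q|lborel. LINT x|lborel. LINT y|lborel. Z q x y)
       = integral\<^sup>L (lborel \<Otimes>\<^sub>M (lborel \<Otimes>\<^sub>M lborel)) (\<lambda>(q, x, y). Z q x y)"
proof -
  interpret p3: pair_sigma_finite "lborel :: 'a measure" "lborel \<Otimes>\<^sub>M lborel :: ('b \<times> 'c) measure"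
    by (intro pair_sigma_finite.intro sigma_finite_pair_measure lborel.sigma_finite_measure_axioms)
  note [measurable (raw)] = measurable_compose_uncurry3[OF Z]
  have "AE q in lborel. integrable (lborel \<Otimes>\<^sub>M lborel) (\<lambda>(x, y). Z q x y)"
    using p3.AE_integrable_fst'[OF int] by (simp add: case_prod_beta')
  then have "AE q in lborel. (LINT x|lborel. LINT y|lborel. Z q x y)
      = integral\<^sup>L (lborel \<Otimes>\<^sub>M lborel) (\<lambda>(x, y). Z q x y)"
    by eventually_elim (simp add: lborel_pair.integral_fst'[symmetric] case_prod_beta')
  then have "(LINT q|lborel. LINT x|lborel. LINT y|lborel. Z q x y)
      = (LINT q|lborel. integral\<^sup>L (lborel \<Otimes>\<^sub>M lborel) (\<lambda>(x, y). Z q x y))"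
    by (intro integral_cong_AE) measurable
  also have "\<dots> = integral\<^sup>L (lborel \<Otimes>\<^sub>M (lborel \<Otimes>\<^sub>M lborel)) (\<lambda>(q, x, y). Z q x y)"
    using p3.integral_fst'[OF int] by (simp add: case_prod_beta')
  finally show ?thesis .
qed

lemma integrable_if_nn_integral_abs_le:
  fixes f :: "'a \<Rightarrow> real"
  assumes f: "f \<in> borel_measurable M" and le: "(\<integral>\<^sup>+x. ennreal \<bar>f x\<bar> \<partial>M) \<le> ennreal c"
    and c: "0 \<le> c"
  shows "integrable M f" and "(LINT x|M. \<bar>f x\<bar>) \<le> c"
proof -
  show int: "integrable M f"
    using le f by (subst integrable_iff_bounded) (auto simp: le_less_trans[OF _ ennreal_less_top])
  have "(\<integral>\<^sup>+x. ennreal \<bar>f x\<bar> \<partial>M) = ennreal (LINT x|M. \<bar>f x\<bar>)"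
    by (rule nn_integral_eq_integral) (use int in auto)
  then show "(LINT x|M. \<bar>f x\<bar>) \<le> c" using le c by (simp add: ennreal_le_iff)
qed

lemma LIMSEQ_lim_of_summable_abs_diff:
  fixes a :: "nat \<Rightarrow> real"
  assumes s: "summable (\<lambda>i. \<bar>a (Suc i) - a i\<bar>)"
  shows "a \<longlonglongrightarrow> lim a" and "\<bar>lim a - a k\<bar> \<le> (\<Sum>i. \<bar>a (Suc (i + k)) - a (i + k)\<bar>)"
proof -
  have s0: "summable (\<lambda>i. a (Suc i) - a i)" using summable_rabs_cancel[OF s] .
  have "(\<lambda>k. a 0 + (\<Sum>i<k. a (Suc i) - a i)) \<longlonglongrightarrow> a 0 + (\<Sum>i. a (Suc i) - a i)"
    by (intro tendsto_add tendsto_const summable_LIMSEQ s0)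
  then have conv: "a \<longlonglongrightarrow> a 0 + (\<Sum>i. a (Suc i) - a i)" by (simp add: sum_lessThan_telescope)
  then have lim: "lim a = a 0 + (\<Sum>i. a (Suc i) - a i)" by (rule limI)
  show "a \<longlonglongrightarrow> lim a" using conv lim by simp
  have "lim a - a k = (\<Sum>i. a (Suc (i + k)) - a (i + k))"
    unfolding lim using suminf_split_initial_segment[OF s0, of k]
    by (simp add: sum_lessThan_telescope)
  also have "\<bar>\<dots>\<bar> \<le> (\<Sum>i. \<bar>a (Suc (i + k)) - a (i + k)\<bar>)"
    by (rule summable_rabs) (use summable_ignore_initial_segment[OF s, of k] in simp)
  finally show "\<bar>lim a - a k\<bar> \<le> (\<Sum>i. \<bar>a (Suc (i + k)) - a (i + k)\<bar>)" .
qed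

lemma suminf_geometric_half_tail: "(\<Sum>i. c * (1/2)^(i + k)) = 2 * c * (1/2::real)^k"
proof -
  have "(\<Sum>i. c * (1/2)^(i + k)) = (\<Sum>i. (c * (1/2)^k) * (1/2::real)^i)"
    by (simp add: power_add mult_ac)
  also have "\<dots> = 2 * c * (1/2)^k"
    by (subst suminf_mult[OF summable_geometric]) (simp_all add: suminf_geometric)
  finally show ?thesis .
qed

lemma nonpos_if_le_geometric_half:
  fixes x c :: real
  assumes "\<And>k. x \<le> c * (1/2)^k"
  shows "x \<le> 0"
proof -
  have "(\<lambda>k. c * (1/2::real)^k) \<longlonglongrightarrow> c * 0"
    by (intro tendsto_mult tendsto_const LIMSEQ_power_zero) simp
  then show ?thesis using assms by (intro LIMSEQ_le_const[of _ 0]) auto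
qed

lemma nn_integral_suminf_increments_le:
  fixes s :: "nat \<Rightarrow> 'a \<Rightarrow> real"
  assumes int: "\<And>k. integrable M (s k)"
    and step: "\<And>k. (LINT x|M. \<bar>s (Suc k) x - s k x\<bar>) \<le> c * (1/2)^k"
  shows "(\<integral>\<^sup>+x. (\<Sum>i. ennreal \<bar>s (Suc (i + k)) x - s (i + k) x\<bar>) \<partial>M) \<le> ennreal (2 * c * (1/2)^k)"
proof -
  note [measurable] = borel_measurable_integrable[OF int]
  have "0 \<le> (LINT x|M. \<bar>s (Suc 0) x - s 0 x\<bar>)" by (rule integral_nonneg_AE) simp
  also have "\<dots> \<le> c" using step[of 0] by simp
  finally have c: "0 \<le> c" .
  have "(\<integral>\<^sup>+x. (\<Sum>i. ennreal \<bar>s (Suc (i + k)) x - s (i + k) x\<bar>) \<partial>M)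
      = (\<Sum>i. ennreal (LINT x|M. \<bar>s (Suc (i + k)) x - s (i + k) x\<bar>))"
    by (subst nn_integral_suminf) (measurable, use int in \<open>simp add: nn_integral_eq_integral\<close>)
  also have "\<dots> \<le> (\<Sum>i. ennreal (c * (1/2)^(i + k)))"
    by (intro suminf_le summableI ennreal_leI step)
  also have "\<dots> = ennreal (\<Sum>i. c * (1/2)^(i + k))"
    by (rule suminf_ennreal2)
      (use c in \<open>auto intro!: summable_mult summable_ignore_initial_segment[OF summable_geometric]\<close>)
  also have "\<dots> = ennreal (2 * c * (1/2)^k)" by (simp add: suminf_geometric_half_tail)
  finally show ?thesis .
qed

lemma L1_limit_of_geometric_increments:
  fixes s :: "nat \<Rightarrow> 'a \<Rightarrow> real"
  assumes int: "\<And>k. integrable M (s k)"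
    and step: "\<And>k. (LINT x|M. \<bar>s (Suc k) x - s k x\<bar>) \<le> c * (1/2)^k"
  shows "AE x in M. (\<lambda>k. s k x) \<longlonglongrightarrow> lim (\<lambda>k. s k x)"
    and "integrable M (\<lambda>x. lim (\<lambda>k. s k x) - s k x)"
    and "(LINT x|M. \<bar>lim (\<lambda>k. s k x) - s k x\<bar>) \<le> 2 * c * (1/2)^k"
proof -
  note [measurable] = borel_measurable_integrable[OF int]
  have "0 \<le> (LINT x|M. \<bar>s (Suc 0) x - s 0 x\<bar>)" by (rule integral_nonneg_AE) simp
  also have "\<dots> \<le> c" using step[of 0] by simp
  finally have c: "0 \<le> c" .
  note tail = nn_integral_suminf_increments_le[OF int step]
  have "AE x in M. (\<Sum>i. ennreal \<bar>s (Suc i) x - s i x\<bar>) \<noteq> \<infinity>"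
    using tail[of 0] by (intro nn_integral_PInf_AE) (measurable, auto simp: top_unique)
  then have summable: "AE x in M. summable (\<lambda>i. \<bar>s (Suc i) x - s i x\<bar>)"
    by eventually_elim (rule summable_suminf_not_top, auto)
  then show "AE x in M. (\<lambda>k. s k x) \<longlonglongrightarrow> lim (\<lambda>k. s k x)"
    by eventually_elim (rule LIMSEQ_lim_of_summable_abs_diff)
  have "AE x in M. ennreal \<bar>lim (\<lambda>k. s k x) - s k x\<bar>
      \<le> (\<Sum>i. ennreal \<bar>s (Suc (i + k)) x - s (i + k) x\<bar>)"
    using summable
  proof eventually_elim
    case (elim x)
    have "ennreal \<bar>lim (\<lambda>k. s k x) - s k x\<bar> \<le> ennreal (\<Sum>i. \<bar>s (Suc (i + k)) x - s (i + k) x\<bar>)"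
      by (intro ennreal_leI LIMSEQ_lim_of_summable_abs_diff(2) elim)
    also have "\<dots> = (\<Sum>i. ennreal \<bar>s (Suc (i + k)) x - s (i + k) x\<bar>)"
      by (rule suminf_ennreal2[symmetric])
        (use summable_ignore_initial_segment[OF elim, of k] in auto)
    finally show ?case .
  qed
  then have "(\<integral>\<^sup>+x. ennreal \<bar>lim (\<lambda>k. s k x) - s k x\<bar> \<partial>M)
      \<le> (\<integral>\<^sup>+x. (\<Sum>i. ennreal \<bar>s (Suc (i + k)) x - s (i + k) x\<bar>) \<partial>M)"
    by (rule nn_integral_mono_AE)
  also note tail
  finally have le: "(\<integral>\<^sup>+x. ennreal \<bar>lim (\<lambda>k. s k x) - s k x\<bar> \<partial>M) \<le> ennreal (2 * c * (1/2)^k)" .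
  have "(\<lambda>x. lim (\<lambda>k. s k x) - s k x) \<in> borel_measurable M" by measurable
  from integrable_if_nn_integral_abs_le[OF this le] c
  show "integrable M (\<lambda>x. lim (\<lambda>k. s k x) - s k x)"
    and "(LINT x|M. \<bar>lim (\<lambda>k. s k x) - s k x\<bar>) \<le> 2 * c * (1/2)^k" by simp_all
qed

lemma borel_measurable_if_integrable_lborel:
  "integrable lborel (f :: 'a::euclidean_space \<Rightarrow> real) \<Longrightarrow> f \<in> borel_measurable borel"
  using borel_measurable_integrable[of lborel f] by simp

lemma L1norm_nonneg: "0 \<le> L1norm f"
  unfolding L1norm_def by (rule integral_nonneg_AE) auto

lemma nn_integral_abs_eq_L1norm:
  "integrable lborel f \<Longrightarrow> (\<integral>\<^sup>+p. ennreal \<bar>f p\<bar> \<partial>lborel) = ennreal (L1norm f)"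
  unfolding L1norm_def by (rule nn_integral_eq_integral) auto

lemma L1norm_diff_commute: "L1norm (\<lambda>p. f p - g p) = L1norm (\<lambda>p. g p - f p)"
  unfolding L1norm_def by (simp add: abs_minus_commute)

lemma L1norm_triangle:
  assumes "integrable lborel f" "integrable lborel g" "integrable lborel h"
  shows "L1norm (\<lambda>p. f p - h p) \<le> L1norm (\<lambda>p. f p - g p) + L1norm (\<lambda>p. g p - h p)"
proof -
  have "L1norm (\<lambda>p. f p - h p) \<le> (LINT p|lborel. \<bar>f p - g p\<bar> + \<bar>g p - h p\<bar>)"
    unfolding L1norm_def by (rule integral_mono) (use assms in auto)
  also have "\<dots> = L1norm (\<lambda>p. f p - g p) + L1norm (\<lambda>p. g p - h p)"
    unfolding L1norm_def by (rule Bochner_Integration.integral_add) (use assms in auto)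
  finally show ?thesis .
qed

lemma AE_eq_if_L1norm_diff_nonpos:
  assumes "integrable lborel f" "integrable lborel g" "L1norm (\<lambda>p. f p - g p) \<le> 0"
  shows "AE p in lborel. f p = g p"
proof -
  have "L1norm (\<lambda>p. f p - g p) = 0" using assms(3) L1norm_nonneg by (simp add: order_antisym)
  then have "AE p in lborel. \<bar>f p - g p\<bar> = 0"
    using integral_nonneg_eq_0_iff_AE[of lborel "\<lambda>p. \<bar>f p - g p\<bar>"] assms(1,2)
    unfolding L1norm_def by auto
  then show ?thesis by eventually_elim simp
qed

section \<open>The weighted scalar product and the collision map\<close>

lemma dotm_commute: "dotm A B p q = dotm A B q p"
  by (simp add: dotm_def algebra_simps)

lemma dotm_zero [simp]: "dotm A B 0 p = 0" "dotm A B p 0 = 0"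
  by (simp_all add: dotm_def)

lemma dotm_linear:
  "dotm A B w (p + q) = dotm A B w p + dotm A B w q"
  "dotm A B w (p - q) = dotm A B w p - dotm A B w q"
  "dotm A B w (c *\<^sub>R q) = c * dotm A B w q"
  "dotm A B w (- q) = - dotm A B w q"
  "dotm A B (p + q) w = dotm A B p w + dotm A B q w"
  "dotm A B (p - q) w = dotm A B p w - dotm A B q w"
  "dotm A B (c *\<^sub>R q) w = c * dotm A B q w"
  "dotm A B (- q) w = - dotm A B q w"
  by (simp_all add: dotm_def algebra_simps)

definition orthonormal_coords :: "real \<Rightarrow> real \<Rightarrow> vec3 \<Rightarrow> vec3" where
  "orthonormal_coords A B p = vector [A * p $ 1, B * p $ 2, B * p $ 3]"

lemma dotm_eq_inner: "dotm A B p q = orthonormal_coords A B p \<bullet> orthonormal_coords A B q"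
  by (simp add: orthonormal_coords_def dotm_def inner_vec_def sum_3 vector_3 power2_eq_square
      algebra_simps)

lemma nrm2_nonneg: "0 \<le> nrm2 A B p"
  by (simp add: nrm2_def dotm_eq_inner)

lemma dotm_Cauchy_Schwarz: "(dotm A B w p)\<^sup>2 \<le> nrm2 A B w * nrm2 A B p"
  unfolding nrm2_def dotm_eq_inner by (rule Cauchy_Schwarz_ineq)

lemma p0_ge_1: "1 \<le> p0 A B p"
  using nrm2_nonneg[of A B p] by (simp add: p0_def)

lemma p0_pos: "0 < p0 A B p"
  using p0_ge_1[of A B p] by linarith

lemma p0_squared: "(p0 A B p)\<^sup>2 = 1 + nrm2 A B p"
  using nrm2_nonneg[of A B p] by (simp add: p0_def)

lemma abs_dotm_less_p0:
  assumes "nrm2 A B w = 1"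
  shows "\<bar>dotm A B w p\<bar> < p0 A B p"
proof -
  have "(dotm A B w p)\<^sup>2 < (p0 A B p)\<^sup>2"
    using dotm_Cauchy_Schwarz[of A B w p] assms by (simp add: p0_squared)
  then show ?thesis using p0_pos[of A B p] by (simp add: power2_less_imp_less)
qed

lemma Ccoll_eq:
  "Ccoll A B p q w = 2 * (p0 A B p + p0 A B q) * (p0 A B p * dotm A B w q - p0 A B q * dotm A B w p)
      / ((p0 A B p + p0 A B q)\<^sup>2 - (dotm A B w p + dotm A B w q)\<^sup>2)"
proof -
  have "2 * p0 A B p * p0 A B q * (p0 A B p + p0 A B q) * dotm A B w (hat A B q - hat A B p)
      = 2 * (p0 A B p + p0 A B q) * (p0 A B p * p0 A B q * dotm A B w (hat A B q - hat A B p))"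
    by (simp only: ac_simps)
  also have "p0 A B p * p0 A B q * dotm A B w (hat A B q - hat A B p)
      = p0 A B p * dotm A B w q - p0 A B q * dotm A B w p"
    using p0_pos[of A B p] p0_pos[of A B q] by (simp add: hat_def dotm_linear field_simps)
  finally show ?thesis by (simp only: Ccoll_def Let_def dotm_linear(1))
qed

lemma Ccoll_swap: "Ccoll A B q p w = - Ccoll A B p q w"
proof -
  have "\<And>D D' n n' :: real. D = D' \<Longrightarrow> n = - n' \<Longrightarrow> n / D = - (n' / D')" by simp
  then show ?thesis unfolding Ccoll_eq by this (simp_all add: algebra_simps)
qed

lemma qprime_eq_pprime_swap: "qprime A B p q w = pprime A B q p w"
  by (simp add: qprime_def pprime_def Ccoll_swap[of A B q p w])

lemma power2_less_if_abs_less: "\<bar>x\<bar> < y \<Longrightarrow> x\<^sup>2 < (y::real)\<^sup>2"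
  using power_strict_mono[of "\<bar>x\<bar>" y 2] by simp

lemma collision_energy_numerator_pos:
  fixes P Q \<alpha> \<beta> :: real
  assumes P: "P > 0" "Q > 0" and \<alpha>\<beta>: "\<bar>\<alpha>\<bar> < P" "\<bar>\<beta>\<bar> < Q"
  shows "P * ((P + Q)\<^sup>2 - (\<alpha> + \<beta>)\<^sup>2) + 2 * (\<alpha> + \<beta>) * (P * \<beta> - Q * \<alpha>) > 0"
proof -
  have "(P + 2 * Q) * \<alpha>\<^sup>2 < (P + 2 * Q) * P\<^sup>2"
    using P power2_less_if_abs_less[OF \<alpha>\<beta>(1)] by simp
  moreover have "\<alpha> * \<beta> \<le> P * \<bar>\<beta>\<bar>"
    using abs_ge_self[of "\<alpha> * \<beta>"] mult_right_mono[of "\<bar>\<alpha>\<bar>" P "\<bar>\<beta>\<bar>"] \<alpha>\<beta>(1)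
    by (simp add: abs_mult)
  then have "Q * (\<alpha> * \<beta>) \<le> Q * (P * \<bar>\<beta>\<bar>)" using P by simp
  moreover have "0 \<le> P * (Q - \<bar>\<beta>\<bar>)\<^sup>2" using P by simp
  moreover have "P * (Q - \<bar>\<beta>\<bar>)\<^sup>2 = P * Q\<^sup>2 + P * \<beta>\<^sup>2 - 2 * Q * (P * \<bar>\<beta>\<bar>)"
    by (simp add: power2_eq_square algebra_simps)
  ultimately show ?thesis by (simp add: power2_eq_square algebra_simps)
qed

lemma collision_energy_sqrt:
  fixes P Q \<alpha> \<beta> C :: real
  assumes P: "P > 0" "Q > 0" and \<alpha>\<beta>: "\<bar>\<alpha>\<bar> < P" "\<bar>\<beta>\<bar> < Q"
    and C: "C * ((P + Q)\<^sup>2 - (\<alpha> + \<beta>)\<^sup>2) = 2 * (P + Q) * (P * \<beta> - Q * \<alpha>)"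
  shows "sqrt (P\<^sup>2 + 2 * C * \<alpha> + C\<^sup>2) = P + C * (\<alpha> + \<beta>) / (P + Q)"
proof -
  define D where "D = (P + Q)\<^sup>2 - (\<alpha> + \<beta>)\<^sup>2"
  define E where "E = P + Q"
  have "\<bar>\<alpha> + \<beta>\<bar> < P + Q" using \<alpha>\<beta> by linarith
  then have D: "D > 0" unfolding D_def by (simp add: power2_less_if_abs_less)
  have E: "E > 0" using P by (simp add: E_def)
  then have "(P + C * (\<alpha> + \<beta>) / E)\<^sup>2 - (P\<^sup>2 + 2 * C * \<alpha> + C\<^sup>2)
      = C / E\<^sup>2 * (2 * E * (P * \<beta> - Q * \<alpha>) - C * (E\<^sup>2 - (\<alpha> + \<beta>)\<^sup>2))"
    by (simp add: field_simps power2_eq_square) (simp add: E_def algebra_simps)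
  then have square: "(P + C * (\<alpha> + \<beta>) / E)\<^sup>2 = P\<^sup>2 + 2 * C * \<alpha> + C\<^sup>2"
    using C unfolding E_def by simp
  have C_eq: "C = 2 * E * (P * \<beta> - Q * \<alpha>) / D"
    using C D unfolding D_def E_def by (simp add: field_simps)
  have "P + C * (\<alpha> + \<beta>) / E = (P * D + 2 * (\<alpha> + \<beta>) * (P * \<beta> - Q * \<alpha>)) / D"
    unfolding C_eq using D E by (simp add: field_simps)
  also have "\<dots> > 0"
    using collision_energy_numerator_pos[OF P \<alpha>\<beta>] D unfolding D_def by simp
  finally show ?thesis using square unfolding E_def by (metis real_sqrt_abs abs_of_pos)
qed

lemma collision_numerator_reverses:
  fixes P Q \<alpha> \<beta> C :: real
  assumes "P + Q \<noteq> 0"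
    and C: "C * ((P + Q)\<^sup>2 - (\<alpha> + \<beta>)\<^sup>2) = 2 * (P + Q) * (P * \<beta> - Q * \<alpha>)"
  shows "(P + C * (\<alpha> + \<beta>) / (P + Q)) * (\<beta> - C) - (Q - C * (\<alpha> + \<beta>) / (P + Q)) * (\<alpha> + C)
       = - (P * \<beta> - Q * \<alpha>)"
proof -
  define E where "E = P + Q"
  have E: "E \<noteq> 0" using assms(1) by (simp add: E_def)
  have "(P + C * (\<alpha> + \<beta>) / E) * (\<beta> - C) - (Q - C * (\<alpha> + \<beta>) / E) * (\<alpha> + C)
      = (P * \<beta> - Q * \<alpha>) - C * (P + Q) + C * (\<alpha> + \<beta>)\<^sup>2 / E"
    using E by (simp add: field_simps power2_eq_square)
  also have "\<dots> = (P * \<beta> - Q * \<alpha>) - C * (E\<^sup>2 - (\<alpha> + \<beta>)\<^sup>2) / E"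
    using E unfolding E_def[symmetric] by (simp add: field_simps power2_eq_square)
  also have "\<dots> = - (P * \<beta> - Q * \<alpha>)"
    unfolding E_def C using assms(1) by (simp add: field_simps)
  finally show ?thesis unfolding E_def .
qed

locale unit_direction =
  fixes A B :: real and w :: vec3
  assumes unit: "nrm2 A B w = 1"
begin

abbreviation "P \<equiv> p0 A B"
abbreviation "dt \<equiv> dotm A B"

lemma abs_dotm_less: "\<bar>dt w p\<bar> < P p"
  by (rule abs_dotm_less_p0[OF unit])

lemma collision_denominator_pos: "(P p + P q)\<^sup>2 - (dt w p + dt w q)\<^sup>2 > 0"
proof -
  have "\<bar>dt w p + dt w q\<bar> < P p + P q" using abs_dotm_less[of p] abs_dotm_less[of q] by linarith
  then show ?thesis by (simp add: power2_less_if_abs_less)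
qed

lemma nrm2_add_scaleR: "nrm2 A B (p + c *\<^sub>R w) = nrm2 A B p + 2 * c * dt w p + c\<^sup>2"
  using unit by (simp add: nrm2_def dotm_linear dotm_commute[of A B w p] power2_eq_square algebra_simps)

lemma Ccoll_mult_denominator:
  "Ccoll A B p q w * ((P p + P q)\<^sup>2 - (dt w p + dt w q)\<^sup>2)
    = 2 * (P p + P q) * (P p * dt w q - P q * dt w p)"
  using collision_denominator_pos[of p q] by (simp add: Ccoll_eq)

lemma p0_pprime:
  "P (pprime A B p q w) = P p + Ccoll A B p q w * (dt w p + dt w q) / (P p + P q)"
proof -
  have "P (pprime A B p q w) = sqrt ((P p)\<^sup>2 + 2 * Ccoll A B p q w * dt w p + (Ccoll A B p q w)\<^sup>2)"
    by (simp add: p0_def pprime_def nrm2_add_scaleR nrm2_nonneg)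
  also have "\<dots> = P p + Ccoll A B p q w * (dt w p + dt w q) / (P p + P q)"
    by (intro collision_energy_sqrt p0_pos abs_dotm_less Ccoll_mult_denominator)
  finally show ?thesis .
qed

lemma p0_qprime:
  "P (qprime A B p q w) = P q - Ccoll A B p q w * (dt w p + dt w q) / (P p + P q)"
  unfolding qprime_eq_pprime_swap p0_pprime Ccoll_swap[of A B q p] by (simp add: ac_simps)

lemma dotm_pprime: "dt w (pprime A B p q w) = dt w p + Ccoll A B p q w"
  using unit by (simp add: pprime_def nrm2_def dotm_linear)

lemma dotm_qprime: "dt w (qprime A B p q w) = dt w q - Ccoll A B p q w"
  using unit by (simp add: qprime_def nrm2_def dotm_linear)

lemma energy_conservation: "P (pprime A B p q w) + P (qprime A B p q w) = P p + P q"
  by (simp add: p0_pprime p0_qprime)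

lemma Ccoll_pprime_qprime: "Ccoll A B (pprime A B p q w) (qprime A B p q w) w = - Ccoll A B p q w"
proof -
  let ?p' = "pprime A B p q w" and ?q' = "qprime A B p q w"
  have sum: "dt w ?p' + dt w ?q' = dt w p + dt w q"
    by (simp add: dotm_pprime dotm_qprime)
  have "P ?p' * dt w ?q' - P ?q' * dt w ?p' = - (P p * dt w q - P q * dt w p)"
    unfolding p0_pprime p0_qprime dotm_pprime dotm_qprime
    by (rule collision_numerator_reverses)
      (use p0_pos[of A B p] p0_pos[of A B q] Ccoll_mult_denominator in auto)
  then have "Ccoll A B ?p' ?q' w
     = 2 * (P p + P q) * - (P p * dt w q - P q * dt w p) / ((P p + P q)\<^sup>2 - (dt w p + dt w q)\<^sup>2)"
    unfolding Ccoll_eq energy_conservation sum by simp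
  also have "\<dots> = - Ccoll A B p q w"
    using Ccoll_mult_denominator[of p q] collision_denominator_pos[of p q]
    by (simp add: field_simps)
  finally show ?thesis .
qed

lemma pprime_involution: "pprime A B (pprime A B p q w) (qprime A B p q w) w = p"
  unfolding pprime_def[of A B "pprime A B p q w"] Ccoll_pprime_qprime by (simp add: pprime_def)

lemma qprime_involution: "qprime A B (pprime A B p q w) (qprime A B p q w) w = q"
  unfolding qprime_def[of A B "pprime A B p q w"] Ccoll_pprime_qprime by (simp add: qprime_def)

end

section \<open>The Jacobian of the collision map\<close>

lemma has_derivative_dotm [derivative_intros]:
  assumes "(f has_derivative f') (at x within S)" "(g has_derivative g') (at x within S)"
  shows "((\<lambda>x. dotm A B (f x) (g x)) has_derivative
           (\<lambda>h. dotm A B (f' h) (g x) + dotm A B (f x) (g' h))) (at x within S)"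
proof -
  have "\<And>i. ((\<lambda>x. f x $ i) has_derivative (\<lambda>h. f' h $ i)) (at x within S)"
       "\<And>i. ((\<lambda>x. g x $ i) has_derivative (\<lambda>h. g' h $ i)) (at x within S)"
    using bounded_linear.has_derivative[OF bounded_linear_vec_nth assms(1)]
      bounded_linear.has_derivative[OF bounded_linear_vec_nth assms(2)] by auto
  then show ?thesis unfolding dotm_def
    by (auto intro!: derivative_eq_intros simp: algebra_simps)
qed

lemma has_derivative_p0 [derivative_intros]:
  assumes "(f has_derivative f') (at x within S)"
  shows "((\<lambda>x. p0 A B (f x)) has_derivative (\<lambda>h. dotm A B (f x) (f' h) / p0 A B (f x)))
    (at x within S)"
proof -
  have pos: "0 < 1 + nrm2 A B (f x)" using nrm2_nonneg[of A B "f x"] by simp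
  have "((\<lambda>x. sqrt (1 + nrm2 A B (f x))) has_derivative
      (\<lambda>h. (0 + (dotm A B (f' h) (f x) + dotm A B (f x) (f' h))) * (inverse (sqrt (1 + nrm2 A B (f x))) / 2)))
      (at x within S)"
    by (rule has_derivative_real_sqrt[where g="\<lambda>x. 1 + nrm2 A B (f x)", OF pos])
      (unfold nrm2_def, intro has_derivative_add has_derivative_const has_derivative_dotm assms)
  then show ?thesis unfolding p0_def
    by (rule has_derivative_eq_rhs) (simp add: fun_eq_iff dotm_commute[of A B "f' _" "f x"] field_simps)
qed

lemma det_rank_one_update:
  fixes w :: vec3 and l :: "vec3 \<Rightarrow> real"
  assumes "linear l"
  shows "det (matrix (\<lambda>h. h + l h *\<^sub>R w)) = 1 + l w"
proof -
  have "w = (\<Sum>i\<in>UNIV. (w$i) *s axis i 1)" by (simp add: basis_expansion)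
  then have "l w = l (\<Sum>i\<in>UNIV. (w$i) *\<^sub>R axis i 1)" by (simp add: scalar_mult_eq_scaleR)
  also have "\<dots> = (\<Sum>i\<in>UNIV. (w$i) * l (axis i 1))"
    using assms by (simp add: linear_sum linear_scale)
  finally have "l w = w$1 * l (axis 1 1) + w$2 * l (axis 2 1) + w$3 * l (axis 3 1)"
    by (simp add: sum_3)
  then show ?thesis unfolding det_3
    by (simp add: matrix_def axis_def algebra_simps)
qed

lemma collision_jacobian_identity:
  fixes P Q \<alpha> \<beta> :: real
  assumes P: "P > 0" and Q: "Q > 0" and D: "(P + Q)\<^sup>2 - (\<alpha> + \<beta>)\<^sup>2 > 0"
  defines "E \<equiv> P + Q" and "D \<equiv> (P + Q)\<^sup>2 - (\<alpha> + \<beta>)\<^sup>2" and "N \<equiv> P * \<beta> - Q * \<alpha>"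
  defines "C \<equiv> 2 * E * N / D"
  defines "E' \<equiv> \<alpha> / P - \<beta> / Q" and "N' \<equiv> \<alpha> * \<beta> / P + \<alpha> * \<beta> / Q - P - Q"
  shows "1 + ((2 * E' * N + 2 * E * N') / D - 2 * E * N * (2 * E * E') / D\<^sup>2)
    = - ((P + C * (\<alpha> + \<beta>) / E) * (Q - C * (\<alpha> + \<beta>) / E)) / (P * Q)"
proof -
  have E: "E > 0" using P Q E_def by simp
  have D': "D > 0" using D D_def by simp
  have "(1 + ((2 * E' * N + 2 * E * N') / D - 2 * E * N * (2 * E * E') / D\<^sup>2)) * (P * Q * D\<^sup>2)
     = D\<^sup>2 * P * Q + (2 * (\<alpha> * Q - \<beta> * P) * N + 2 * E * (\<alpha> * \<beta> * (P + Q) - P * Q * (P + Q))) * D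
       - 4 * E * E * N * (\<alpha> * Q - \<beta> * P)"
    using P Q D' unfolding E'_def N'_def by (simp add: field_simps power2_eq_square)
  also have "\<dots> = - ((P * D + 2 * N * (\<alpha> + \<beta>)) * (Q * D - 2 * N * (\<alpha> + \<beta>)))"
    unfolding D_def N_def E_def by (simp add: power2_eq_square algebra_simps)
  also have "\<dots> = - ((P + C * (\<alpha> + \<beta>) / E) * (Q - C * (\<alpha> + \<beta>) / E)) / (P * Q) * (P * Q * D\<^sup>2)"
    using P Q D' E unfolding C_def by (simp add: field_simps power2_eq_square)
  finally show ?thesis using P Q D' by (subst (asm) mult_cancel_right) simp
qed

lemma borel_measurable_vec_nth [measurable]:
  fixes f :: "'a \<Rightarrow> real^'n"
  assumes "f \<in> borel_measurable M"
  shows "(\<lambda>x. f x $ i) \<in> borel_measurable M"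
  by (rule measurable_compose[OF assms borel_measurable_continuous_onI])
    (intro continuous_on_component continuous_on_id)

lemma borel_measurable_dotm [measurable]:
  assumes [measurable]: "f \<in> borel_measurable M" "g \<in> borel_measurable M"
  shows "(\<lambda>x. dotm A B (f x) (g x)) \<in> borel_measurable M"
  unfolding dotm_def by measurable

lemma borel_measurable_p0 [measurable]:
  assumes [measurable]: "f \<in> borel_measurable M"
  shows "(\<lambda>x. p0 A B (f x)) \<in> borel_measurable M"
  unfolding p0_def nrm2_def by measurable

lemma borel_measurable_Ccoll [measurable]:
  assumes [measurable]: "f \<in> borel_measurable M" "g \<in> borel_measurable M" "h \<in> borel_measurable M"
  shows "(\<lambda>x. Ccoll A B (f x) (g x) (h x)) \<in> borel_measurable M"
  unfolding Ccoll_def Let_def hat_def by measurable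

lemma borel_measurable_pprime [measurable]:
  assumes [measurable]: "f \<in> borel_measurable M" "g \<in> borel_measurable M" "h \<in> borel_measurable M"
  shows "(\<lambda>x. pprime A B (f x) (g x) (h x)) \<in> borel_measurable M"
  unfolding pprime_def by measurable

lemma borel_measurable_qprime [measurable]:
  assumes [measurable]: "f \<in> borel_measurable M" "g \<in> borel_measurable M" "h \<in> borel_measurable M"
  shows "(\<lambda>x. qprime A B (f x) (g x) (h x)) \<in> borel_measurable M"
  unfolding qprime_def by measurable

context unit_direction
begin

text \<open>The quotient rule applied to \<open>Ccoll_eq\<close> on the fibre \<open>p + q = s\<close>.\<close>
definition Ccoll_fibre_deriv :: "vec3 \<Rightarrow> vec3 \<Rightarrow> vec3 \<Rightarrow> real" where
  "Ccoll_fibre_deriv s p h =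
    (let P1 = P p; P2 = P (s - p); \<alpha> = dt w p; \<beta> = dt w (s - p); E = P1 + P2;
      N = P1 * \<beta> - P2 * \<alpha>; D = E\<^sup>2 - (dt w s)\<^sup>2;
      E' = dt p h / P1 - dt (s - p) h / P2;
      N' = (dt p h / P1) * \<beta> - P1 * dt w h + (dt (s - p) h / P2) * \<alpha> - P2 * dt w h
     in (2 * E' * N + 2 * E * N') / D - 2 * E * N * (2 * E * E') / D\<^sup>2)"

lemma Ccoll_fibre_eq:
  "Ccoll A B p (s - p) w = 2 * (P p + P (s - p)) * (P p * dt w (s - p) - P (s - p) * dt w p)
     / ((P p + P (s - p))\<^sup>2 - (dt w s)\<^sup>2)"
  unfolding Ccoll_eq by (simp add: dotm_linear)

lemma fibre_denominator_pos: "(P p + P (s - p))\<^sup>2 - (dt w s)\<^sup>2 > 0"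
  using collision_denominator_pos[of p "s - p"] by (simp add: dotm_linear)

lemma has_derivative_Ccoll_fibre:
  "((\<lambda>p. Ccoll A B p (s - p) w) has_derivative Ccoll_fibre_deriv s p) (at p)"
proof -
  have dP1: "((\<lambda>p. P p) has_derivative (\<lambda>h. dt p h / P p)) (at p)"
    by (rule has_derivative_eq_rhs[OF has_derivative_p0[OF has_derivative_ident]]) simp
  have dP2: "((\<lambda>p. P (s - p)) has_derivative (\<lambda>h. - dt (s - p) h / P (s - p))) (at p)"
    by (rule has_derivative_eq_rhs[OF has_derivative_p0[OF
          has_derivative_diff[OF has_derivative_const has_derivative_ident]]])
      (simp add: fun_eq_iff dotm_linear)
  have d\<alpha>: "((\<lambda>p. dt w p) has_derivative (\<lambda>h. dt w h)) (at p)"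
    by (rule has_derivative_eq_rhs[OF has_derivative_dotm[OF has_derivative_const has_derivative_ident]])
      (simp add: fun_eq_iff)
  have d\<beta>: "((\<lambda>p. dt w (s - p)) has_derivative (\<lambda>h. - dt w h)) (at p)"
    by (rule has_derivative_eq_rhs[OF has_derivative_dotm[OF has_derivative_const
          has_derivative_diff[OF has_derivative_const has_derivative_ident]]])
      (simp add: fun_eq_iff dotm_linear)
  let ?E' = "\<lambda>h. dt p h / P p - dt (s - p) h / P (s - p)"
  let ?N' = "\<lambda>h. (dt p h / P p) * dt w (s - p) - P p * dt w h
    + (dt (s - p) h / P (s - p)) * dt w p - P (s - p) * dt w h"
  have dE: "((\<lambda>p. P p + P (s - p)) has_derivative ?E') (at p)"
    by (rule has_derivative_eq_rhs[OF has_derivative_add[OF dP1 dP2]]) (simp add: fun_eq_iff)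
  have dN: "((\<lambda>p. P p * dt w (s - p) - P (s - p) * dt w p) has_derivative ?N') (at p)"
    by (rule has_derivative_eq_rhs[OF has_derivative_diff[OF
          has_derivative_mult[OF dP1 d\<beta>] has_derivative_mult[OF dP2 d\<alpha>]]])
      (simp add: fun_eq_iff algebra_simps)
  have dF: "((\<lambda>p. 2 * (P p + P (s - p)) * (P p * dt w (s - p) - P (s - p) * dt w p)) has_derivative
      (\<lambda>h. 2 * ?E' h * (P p * dt w (s - p) - P (s - p) * dt w p) + 2 * (P p + P (s - p)) * ?N' h))
      (at p)"
    by (rule has_derivative_eq_rhs[OF has_derivative_mult[OF
          has_derivative_mult[OF has_derivative_const dE] dN]])
      (simp add: fun_eq_iff algebra_simps)
  have dD: "((\<lambda>p. (P p + P (s - p))\<^sup>2 - (dt w s)\<^sup>2) has_derivative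
      (\<lambda>h. 2 * (P p + P (s - p)) * ?E' h)) (at p)"
    by (rule has_derivative_eq_rhs[OF has_derivative_diff[OF
          has_derivative_power[OF dE] has_derivative_const]])
      (use p0_pos[of A B p] p0_pos[of A B "s - p"] in \<open>auto simp: fun_eq_iff field_simps\<close>)
  have D: "(P p + P (s - p))\<^sup>2 - (dt w s)\<^sup>2 \<noteq> 0" using fibre_denominator_pos[of p s] by simp
  have quotient: "(a * G - F * b) / (G * G) = a / G - F * b / G\<^sup>2" if "G \<noteq> 0" for a b F G :: real
    using that by (simp add: field_simps power2_eq_square)
  show ?thesis unfolding Ccoll_fibre_eq
    by (rule has_derivative_eq_rhs[OF has_derivative_divide'[OF dF dD D]])
      (simp only: fun_eq_iff Ccoll_fibre_deriv_def Let_def quotient[OF D], simp)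
qed

lemma fibre_map_involution: "pprime A B (pprime A B p (s - p) w) (s - pprime A B p (s - p) w) w = p"
proof -
  have "qprime A B p (s - p) w = s - pprime A B p (s - p) w"
    by (simp add: pprime_def qprime_def algebra_simps)
  then show ?thesis using pprime_involution[of p "s - p"] by simp
qed

lemma has_derivative_fibre_map:
  "((\<lambda>p. pprime A B p (s - p) w) has_derivative (\<lambda>h. h + Ccoll_fibre_deriv s p h *\<^sub>R w)) (at p)"
  unfolding pprime_def
  by (rule has_derivative_eq_rhs[OF has_derivative_add[OF has_derivative_ident
        has_derivative_scaleR[OF has_derivative_Ccoll_fibre has_derivative_const]]]) simp

lemma abs_det_fibre_map_derivative:
  "\<bar>det (matrix (\<lambda>h. h + Ccoll_fibre_deriv s p h *\<^sub>R w))\<bar>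
    = P (pprime A B p (s - p) w) * P (qprime A B p (s - p) w) / (P p * P (s - p))"
proof -
  have linear: "linear (Ccoll_fibre_deriv s p)"
    using has_derivative_bounded_linear[OF has_derivative_Ccoll_fibre] bounded_linear.linear by blast
  have dotm_w: "dt p w = dt w p" "dt (s - p) w = dt w (s - p)" "dt w w = 1"
    "dt w s = dt w p + dt w (s - p)"
    using unit by (simp_all add: dotm_commute nrm2_def dotm_linear)
  have N': "(dt w p / P p) * dt w (s - p) - P p * 1 + (dt w (s - p) / P (s - p)) * dt w p - P (s - p) * 1
     = dt w p * dt w (s - p) / P p + dt w p * dt w (s - p) / P (s - p) - P p - P (s - p)"
    by (simp add: algebra_simps)
  have "1 + Ccoll_fibre_deriv s p w
    = - ((P p + Ccoll A B p (s - p) w * (dt w p + dt w (s - p)) / (P p + P (s - p)))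
        * (P (s - p) - Ccoll A B p (s - p) w * (dt w p + dt w (s - p)) / (P p + P (s - p))))
      / (P p * P (s - p))"
    unfolding Ccoll_eq[of A B p "s - p" w] Ccoll_fibre_deriv_def Let_def dotm_w N'
    by (rule collision_jacobian_identity) (use p0_pos collision_denominator_pos in auto)
  then show ?thesis
    unfolding det_rank_one_update[OF linear] p0_pprime[symmetric] p0_qprime[symmetric]
    using p0_pos[of A B] by (simp add: abs_mult abs_of_pos)
qed

lemma nn_integral_fibre_map:
  fixes H :: "vec3 \<Rightarrow> vec3 \<Rightarrow> real"
  assumes H: "(\<lambda>(x, y). H x y) \<in> borel_measurable borel" and H0: "\<And>x y. 0 \<le> H x y"
  shows "(\<integral>\<^sup>+p. ennreal (H (pprime A B p (s - p) w) (qprime A B p (s - p) w) / (P p * P (s - p))) \<partial>lborel)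
       = (\<integral>\<^sup>+p. ennreal (H p (s - p) / (P p * P (s - p))) \<partial>lborel)"
proof -
  note [measurable] = measurable_compose_uncurry2[OF H]
  let ?\<tau> = "\<lambda>p. pprime A B p (s - p) w"
  let ?f = "\<lambda>p. H p (s - p) / (P p * P (s - p))"
  have q': "qprime A B p (s - p) w = s - ?\<tau> p" for p
    by (simp add: pprime_def qprime_def algebra_simps)
  have Jf: "\<bar>det (matrix (\<lambda>h. h + Ccoll_fibre_deriv s p h *\<^sub>R w))\<bar> * ?f (?\<tau> p)
      = H (?\<tau> p) (qprime A B p (s - p) w) / (P p * P (s - p))" for p
    unfolding abs_det_fibre_map_derivative q'
    using p0_pos[of A B "?\<tau> p"] p0_pos[of A B "s - ?\<tau> p"] p0_pos[of A B p] p0_pos[of A B "s - p"]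
    by (simp add: field_simps)
  have "(\<integral>\<^sup>+p. ennreal (\<bar>det (matrix (\<lambda>h. h + Ccoll_fibre_deriv s p h *\<^sub>R w))\<bar> * ?f (?\<tau> p)) \<partial>lborel)
      = (\<integral>\<^sup>+p. ennreal (?f p) \<partial>lborel)"
  proof (rule nn_integral_involution[OF fibre_map_involution has_derivative_fibre_map])
    show "0 \<le> ?f p" for p using H0[of p "s - p"] p0_pos[of A B p] p0_pos[of A B "s - p"] by simp
  qed (unfold Jf, measurable)
  then show ?thesis unfolding Jf .
qed

text \<open>On each fibre \<open>p + q = s\<close> the collision map is an involution with Jacobian
  \<open>p'\<^sup>0 q'\<^sup>0 / (p\<^sup>0 q\<^sup>0)\<close>, so it preserves \<open>dp dq / (p\<^sup>0 q\<^sup>0)\<close>.\<close>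
lemma nn_integral_collision_invariant:
  fixes H :: "vec3 \<Rightarrow> vec3 \<Rightarrow> real"
  assumes H: "(\<lambda>(x, y). H x y) \<in> borel_measurable borel" and H0: "\<And>x y. 0 \<le> H x y"
  shows "(\<integral>\<^sup>+p. \<integral>\<^sup>+q. ennreal (H (pprime A B p q w) (qprime A B p q w) / (P p * P q)) \<partial>lborel \<partial>lborel)
       = (\<integral>\<^sup>+p. \<integral>\<^sup>+q. ennreal (H p q / (P p * P q)) \<partial>lborel \<partial>lborel)"
proof -
  note [measurable] = measurable_compose_uncurry2[OF H]
  have m1: "(\<lambda>(x, y). ennreal (H (pprime A B x y w) (qprime A B x y w) / (P x * P y)))
      \<in> borel_measurable borel"
    unfolding borel_prod[symmetric] case_prod_beta by measurable
  have m2: "(\<lambda>(x, y). ennreal (H x y / (P x * P y))) \<in> borel_measurable borel"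
    unfolding borel_prod[symmetric] case_prod_beta by measurable
  show ?thesis
    unfolding nn_integral_shear[OF m1] nn_integral_shear[OF m2] using nn_integral_fibre_map[OF H H0] by simp
qed

end

section \<open>The gain and loss operators\<close>

definition sphere_density :: "real \<Rightarrow> real \<Rightarrow> real" where
  "sphere_density \<theta> \<phi> = indicator {0..pi} \<theta> * indicator {0..2*pi} \<phi> * sin \<theta>"

lemma sphere_density_nonneg: "0 \<le> sphere_density \<theta> \<phi>"
  by (auto simp: sphere_density_def indicator_def intro!: sin_ge_zero)

lemma borel_measurable_sphere_density [measurable]:
  assumes [measurable]: "f \<in> borel_measurable M" "g \<in> borel_measurable M"
  shows "(\<lambda>x. sphere_density (f x) (g x)) \<in> borel_measurable M"
  unfolding sphere_density_def by measurable

lemma nn_integral_sphere_density_le: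
  "(\<integral>\<^sup>+\<theta>. \<integral>\<^sup>+\<phi>. ennreal (sphere_density \<theta> \<phi>) \<partial>lborel \<partial>lborel) \<le> ennreal (2 * pi\<^sup>2)"
proof -
  have "(\<integral>\<^sup>+\<theta>. \<integral>\<^sup>+\<phi>. ennreal (sphere_density \<theta> \<phi>) \<partial>lborel \<partial>lborel)
      \<le> (\<integral>\<^sup>+\<theta>. \<integral>\<^sup>+\<phi>. indicator {0..pi} \<theta> * indicator {0..2*pi} \<phi> \<partial>lborel \<partial>lborel)"
    by (intro nn_integral_mono)
      (auto simp: sphere_density_def indicator_def ennreal_indicator[symmetric]
        ennreal_mult'[symmetric])
  also have "\<dots> = ennreal (2 * pi) * ennreal pi"
    by (simp add: nn_integral_cmult nn_integral_multc mult.commute)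
  also have "\<dots> = ennreal (2 * pi\<^sup>2)"
    by (simp add: ennreal_mult'[symmetric] power2_eq_square mult.assoc)
  finally show ?thesis .
qed

lemma sphere_int_eq:
  "sphere_int A B g = (LINT \<theta>|lborel. LINT \<phi>|lborel. sphere_density \<theta> \<phi> * g (sph A B \<theta> \<phi>))"
  unfolding sphere_int_def set_lebesgue_integral_def sphere_density_def by (simp add: mult.assoc)

lemma sphere_int_cmult: "sphere_int A B (\<lambda>w. c * h w) = c * sphere_int A B h"
  unfolding sphere_int_eq by (simp add: mult.left_commute)

lemma abs_sphere_int_le:
  "ennreal \<bar>sphere_int A B g\<bar>
    \<le> (\<integral>\<^sup>+\<theta>. \<integral>\<^sup>+\<phi>. ennreal (sphere_density \<theta> \<phi> * \<bar>g (sph A B \<theta> \<phi>)\<bar>) \<partial>lborel \<partial>lborel)"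
proof -
  have "ennreal \<bar>sphere_int A B g\<bar>
      \<le> (\<integral>\<^sup>+\<theta>. ennreal \<bar>LINT \<phi>|lborel. sphere_density \<theta> \<phi> * g (sph A B \<theta> \<phi>)\<bar> \<partial>lborel)"
    unfolding sphere_int_eq by (rule abs_integral_le_nn_integral)
  also have "\<dots> \<le> (\<integral>\<^sup>+\<theta>. \<integral>\<^sup>+\<phi>. ennreal \<bar>sphere_density \<theta> \<phi> * g (sph A B \<theta> \<phi>)\<bar> \<partial>lborel \<partial>lborel)"
    by (intro nn_integral_mono abs_integral_le_nn_integral)
  finally show ?thesis by (simp add: abs_mult sphere_density_nonneg)
qed

lemma sph_eq: "sph A B \<theta> \<phi> = (sin \<theta> * cos \<phi> / A) *\<^sub>R axis 1 1 + (sin \<theta> * sin \<phi> / B) *\<^sub>R axis 2 1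
    + (cos \<theta> / B) *\<^sub>R axis 3 1"
  by (simp add: sph_def vec_eq_iff forall_3 vector_3 axis_def)

lemma borel_measurable_sph [measurable]:
  assumes [measurable]: "f \<in> borel_measurable M" "g \<in> borel_measurable M"
  shows "(\<lambda>x. sph A B (f x) (g x)) \<in> borel_measurable M"
  unfolding sph_eq by measurable

lemma unit_direction_sph:
  assumes "A > 0" "B > 0"
  shows "unit_direction A B (sph A B \<theta> \<phi>)"
proof
  have "orthonormal_coords A B (sph A B \<theta> \<phi>) = vector [sin \<theta> * cos \<phi>, sin \<theta> * sin \<phi>, cos \<theta>]"
    using assms by (simp add: orthonormal_coords_def sph_def vector_3)
  moreover have "(sin \<theta> * cos \<phi>)\<^sup>2 + (sin \<theta> * sin \<phi>)\<^sup>2 = (sin \<theta>)\<^sup>2 * ((sin \<phi>)\<^sup>2 + (cos \<phi>)\<^sup>2)"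
    by (simp only: power_mult_distrib distrib_left add.commute)
  ultimately show "nrm2 A B (sph A B \<theta> \<phi>) = 1"
    by (simp add: nrm2_def dotm_eq_inner inner_vec_def sum_3 vector_3 power2_eq_square[symmetric])
qed

locale collision_kernel =
  fixes A B C\<^sub>1 :: real and S :: kernel
  assumes A_pos: "A > 0" and B_pos: "B > 0"
    and S_meas: "(\<lambda>(p, q, p', q'). S A B p q p' q') \<in> borel_measurable borel"
    and S_nonneg: "\<And>p q p' q'. 0 \<le> S A B p q p' q'"
    and S_bound: "\<And>p q p' q'. S A B p q p' q' \<le> C\<^sub>1"
    and S_sym: "\<And>p q p' q'. S A B p q p' q' = S A B p' q' p q"
begin

abbreviation "P \<equiv> p0 A B"

definition coll_kernel :: "vec3 \<Rightarrow> vec3 \<Rightarrow> vec3 \<Rightarrow> real" where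
  "coll_kernel p q w = S A B p q (pprime A B p q w) (qprime A B p q w)"

lemma C\<^sub>1_nonneg: "0 \<le> C\<^sub>1"
  using S_nonneg S_bound order_trans by blast

lemma coll_kernel_nonneg: "0 \<le> coll_kernel p q w"
  by (simp add: coll_kernel_def S_nonneg)

lemma coll_kernel_le: "coll_kernel p q w \<le> C\<^sub>1"
  by (simp add: coll_kernel_def S_bound)

lemma borel_measurable_coll_kernel [measurable]:
  assumes [measurable]: "f \<in> borel_measurable M" "g \<in> borel_measurable M" "h \<in> borel_measurable M"
  shows "(\<lambda>x. coll_kernel (f x) (g x) (h x)) \<in> borel_measurable M"
  unfolding coll_kernel_def by (rule measurable_compose_uncurry4[OF S_meas]) measurable

text \<open>The symmetry of \<open>S\<close> and the invariance of \<open>dp dq / (p\<^sup>0 q\<^sup>0)\<close> under the collision map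
  move \<open>f\<close> and \<open>g\<close> back to unprimed arguments.\<close>
lemma nn_integral_gain_direction_le:
  assumes w: "unit_direction A B w"
    and [measurable]: "f \<in> borel_measurable borel" "g \<in> borel_measurable borel"
  shows "(\<integral>\<^sup>+p. \<integral>\<^sup>+q. ennreal (\<bar>f (pprime A B p q w)\<bar> * \<bar>g (qprime A B p q w)\<bar> * coll_kernel p q w
            / (P p * P q)) \<partial>lborel \<partial>lborel)
    \<le> ennreal C\<^sub>1 * (\<integral>\<^sup>+p. ennreal \<bar>f p\<bar> \<partial>lborel) * (\<integral>\<^sup>+q. ennreal \<bar>g q\<bar> \<partial>lborel)"
proof -
  interpret dir: unit_direction A B w by (rule w)
  let ?H = "\<lambda>x y. \<bar>f x\<bar> * \<bar>g y\<bar> * coll_kernel x y w"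
  have H: "(\<lambda>(x, y). ?H x y) \<in> borel_measurable borel"
    unfolding borel_prod[symmetric] case_prod_beta by measurable
  have H0: "\<And>x y. 0 \<le> ?H x y" by (simp add: coll_kernel_nonneg)
  have sym: "coll_kernel (pprime A B p q w) (qprime A B p q w) w = coll_kernel p q w" for p q
    unfolding coll_kernel_def dir.pprime_involution dir.qprime_involution using S_sym by simp
  have "(\<integral>\<^sup>+p. \<integral>\<^sup>+q. ennreal (\<bar>f (pprime A B p q w)\<bar> * \<bar>g (qprime A B p q w)\<bar> * coll_kernel p q w
            / (P p * P q)) \<partial>lborel \<partial>lborel)
      = (\<integral>\<^sup>+p. \<integral>\<^sup>+q. ennreal (?H p q / (P p * P q)) \<partial>lborel \<partial>lborel)"
    using dir.nn_integral_collision_invariant[OF H H0] by (simp add: sym)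
  also have "\<dots> \<le> (\<integral>\<^sup>+p. \<integral>\<^sup>+q. ennreal \<bar>f p\<bar> * (ennreal C\<^sub>1 * ennreal \<bar>g q\<bar>) \<partial>lborel \<partial>lborel)"
  proof (intro nn_integral_mono)
    fix p q
    have "1 \<le> P p * P q"
      using mult_mono[OF p0_ge_1[of A B p] p0_ge_1[of A B q]] p0_pos[of A B p] by simp
    then have "?H p q / (P p * P q) \<le> ?H p q"
      using H0[of p q] by (simp add: divide_le_eq mult_le_cancel_left1 one_le_mult_iff)
    also have "\<dots> \<le> \<bar>f p\<bar> * (C\<^sub>1 * \<bar>g q\<bar>)"
      using mult_left_mono[OF coll_kernel_le[of p q w], of "\<bar>f p\<bar> * \<bar>g q\<bar>"] by (simp add: ac_simps)
    finally show "ennreal (?H p q / (P p * P q)) \<le> ennreal \<bar>f p\<bar> * (ennreal C\<^sub>1 * ennreal \<bar>g q\<bar>)"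
      using C\<^sub>1_nonneg by (simp add: ennreal_mult[symmetric] ennreal_leI)
  qed
  also have "\<dots> = ennreal C\<^sub>1 * (\<integral>\<^sup>+p. ennreal \<bar>f p\<bar> \<partial>lborel) * (\<integral>\<^sup>+q. ennreal \<bar>g q\<bar> \<partial>lborel)"
    by (simp add: nn_integral_cmult nn_integral_multc mult.assoc mult.left_commute)
  finally show ?thesis .
qed


lemma nn_integral_gain_integrand_le:
  assumes [measurable]: "f \<in> borel_measurable borel" "g \<in> borel_measurable borel"
  shows "(\<integral>\<^sup>+p. \<integral>\<^sup>+q. \<integral>\<^sup>+\<theta>. \<integral>\<^sup>+\<phi>. ennreal (sphere_density \<theta> \<phi> * (\<bar>f (pprime A B p q (sph A B \<theta> \<phi>))\<bar>
         * \<bar>g (qprime A B p q (sph A B \<theta> \<phi>))\<bar> * coll_kernel p q (sph A B \<theta> \<phi>)) / (P p * P q))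
         \<partial>lborel \<partial>lborel \<partial>lborel \<partial>lborel)
     \<le> ennreal (2 * pi\<^sup>2 * C\<^sub>1) * (\<integral>\<^sup>+p. ennreal \<bar>f p\<bar> \<partial>lborel) * (\<integral>\<^sup>+q. ennreal \<bar>g q\<bar> \<partial>lborel)"
proof -
  define M where "M = ennreal C\<^sub>1 * (\<integral>\<^sup>+p. ennreal \<bar>f p\<bar> \<partial>lborel) * (\<integral>\<^sup>+q. ennreal \<bar>g q\<bar> \<partial>lborel)"
  let ?Y = "\<lambda>w p q. \<bar>f (pprime A B p q w)\<bar> * \<bar>g (qprime A B p q w)\<bar> * coll_kernel p q w / (P p * P q)"
  have X: "(\<lambda>(p, q, \<theta>, \<phi>). ennreal (sphere_density \<theta> \<phi> * (\<bar>f (pprime A B p q (sph A B \<theta> \<phi>))\<bar>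
      * \<bar>g (qprime A B p q (sph A B \<theta> \<phi>))\<bar> * coll_kernel p q (sph A B \<theta> \<phi>)) / (P p * P q)))
      \<in> borel_measurable borel"
    unfolding borel_prod[symmetric] case_prod_beta by measurable
  have "(\<integral>\<^sup>+p. \<integral>\<^sup>+q. \<integral>\<^sup>+\<theta>. \<integral>\<^sup>+\<phi>. ennreal (sphere_density \<theta> \<phi> * (\<bar>f (pprime A B p q (sph A B \<theta> \<phi>))\<bar>
         * \<bar>g (qprime A B p q (sph A B \<theta> \<phi>))\<bar> * coll_kernel p q (sph A B \<theta> \<phi>)) / (P p * P q))
         \<partial>lborel \<partial>lborel \<partial>lborel \<partial>lborel)
      = (\<integral>\<^sup>+\<theta>. \<integral>\<^sup>+\<phi>. ennreal (sphere_density \<theta> \<phi>) * (\<integral>\<^sup>+p. \<integral>\<^sup>+q. ennreal (?Y (sph A B \<theta> \<phi>) p q)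
         \<partial>lborel \<partial>lborel) \<partial>lborel \<partial>lborel)"
    unfolding nn_integral_commute_pairs[OF X]
    by (simp add: nn_integral_cmult[symmetric] ennreal_mult'[symmetric] sphere_density_nonneg
        mult.assoc)
  also have "\<dots> \<le> (\<integral>\<^sup>+\<theta>. \<integral>\<^sup>+\<phi>. ennreal (sphere_density \<theta> \<phi>) * M \<partial>lborel \<partial>lborel)"
    unfolding M_def
    by (intro nn_integral_mono mult_left_mono nn_integral_gain_direction_le unit_direction_sph
        A_pos B_pos) measurable
  also have "\<dots> \<le> ennreal (2 * pi\<^sup>2) * M"
    by (simp add: nn_integral_multc mult_right_mono nn_integral_sphere_density_le)
  also have "\<dots> = ennreal (2 * pi\<^sup>2 * C\<^sub>1) * (\<integral>\<^sup>+p. ennreal \<bar>f p\<bar> \<partial>lborel) * (\<integral>\<^sup>+q. ennreal \<bar>g q\<bar> \<partial>lborel)"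
    unfolding M_def using C\<^sub>1_nonneg by (simp add: ennreal_mult mult.assoc)
  finally show ?thesis .
qed


definition gain_integrand ::
    "(vec3 \<Rightarrow> real) \<Rightarrow> (vec3 \<Rightarrow> real) \<Rightarrow> vec3 \<Rightarrow> vec3 \<Rightarrow> real \<Rightarrow> real \<Rightarrow> real" where
  "gain_integrand f g p q \<theta> \<phi> = A * B\<^sup>2 / P q * (sphere_density \<theta> \<phi> *
     (f (pprime A B p q (sph A B \<theta> \<phi>)) * g (qprime A B p q (sph A B \<theta> \<phi>)) * coll_kernel p q (sph A B \<theta> \<phi>)))"

lemma Qplus_eq_iterated:
  "Qplus S A B f g p = (LINT q|lborel. LINT \<theta>|lborel. LINT \<phi>|lborel. gain_integrand f g p q \<theta> \<phi>)"
  unfolding Qplus_def sphere_int_eq gain_integrand_def coll_kernel_def by (simp add: mult.assoc)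

lemma borel_measurable_gain_integrand [measurable (raw)]:
  assumes "f \<in> borel_measurable borel" "g \<in> borel_measurable borel"
    and "f1 \<in> borel_measurable M" "f2 \<in> borel_measurable M" "f3 \<in> borel_measurable M"
      "f4 \<in> borel_measurable M"
  shows "(\<lambda>x. gain_integrand f g (f1 x) (f2 x) (f3 x) (f4 x)) \<in> borel_measurable M"
  using assms unfolding gain_integrand_def by measurable

lemma borel_measurable_Qplus:
  assumes [measurable]: "f \<in> borel_measurable borel" "g \<in> borel_measurable borel"
  shows "Qplus S A B f g \<in> borel_measurable borel"
  unfolding Qplus_eq_iterated[abs_def] by measurable

lemma Qplus_nonneg:
  assumes "\<And>x. 0 \<le> f x" "\<And>x. 0 \<le> g x"
  shows "0 \<le> Qplus S A B f g p"
  unfolding Qplus_eq_iterated gain_integrand_def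
  by (intro integral_nonneg_AE AE_I2 mult_nonneg_nonneg sphere_density_nonneg coll_kernel_nonneg assms)
    (use A_pos p0_pos[of A B] in \<open>auto intro: divide_nonneg_pos\<close>)

definition kappa :: real where
  "kappa = A * B\<^sup>2 * (2 * pi\<^sup>2 * C\<^sub>1)"

lemma kappa_nonneg: "0 \<le> kappa"
  unfolding kappa_def using A_pos C\<^sub>1_nonneg by simp

lemma nn_integral_gain_integrand_div_p0_le:
  assumes [measurable]: "f \<in> borel_measurable borel" "g \<in> borel_measurable borel"
  shows "(\<integral>\<^sup>+p. \<integral>\<^sup>+q. \<integral>\<^sup>+\<theta>. \<integral>\<^sup>+\<phi>. ennreal (\<bar>gain_integrand f g p q \<theta> \<phi>\<bar> / P p)
           \<partial>lborel \<partial>lborel \<partial>lborel \<partial>lborel)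
     \<le> ennreal kappa * (\<integral>\<^sup>+p. ennreal \<bar>f p\<bar> \<partial>lborel) * (\<integral>\<^sup>+q. ennreal \<bar>g q\<bar> \<partial>lborel)"
proof -
  have "\<bar>gain_integrand f g p q \<theta> \<phi>\<bar> / P p = A * B\<^sup>2 * (sphere_density \<theta> \<phi> *
      (\<bar>f (pprime A B p q (sph A B \<theta> \<phi>))\<bar> * \<bar>g (qprime A B p q (sph A B \<theta> \<phi>))\<bar>
      * coll_kernel p q (sph A B \<theta> \<phi>)) / (P p * P q))" for p q \<theta> \<phi>
    using A_pos p0_pos[of A B p] p0_pos[of A B q] sphere_density_nonneg[of \<theta> \<phi>]
      coll_kernel_nonneg[of p q "sph A B \<theta> \<phi>"]
    by (simp add: gain_integrand_def abs_mult field_simps)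
  then have "(\<integral>\<^sup>+p. \<integral>\<^sup>+q. \<integral>\<^sup>+\<theta>. \<integral>\<^sup>+\<phi>. ennreal (\<bar>gain_integrand f g p q \<theta> \<phi>\<bar> / P p)
      \<partial>lborel \<partial>lborel \<partial>lborel \<partial>lborel)
    = ennreal (A * B\<^sup>2) * (\<integral>\<^sup>+p. \<integral>\<^sup>+q. \<integral>\<^sup>+\<theta>. \<integral>\<^sup>+\<phi>. ennreal (sphere_density \<theta> \<phi> *
      (\<bar>f (pprime A B p q (sph A B \<theta> \<phi>))\<bar> * \<bar>g (qprime A B p q (sph A B \<theta> \<phi>))\<bar>
      * coll_kernel p q (sph A B \<theta> \<phi>)) / (P p * P q)) \<partial>lborel \<partial>lborel \<partial>lborel \<partial>lborel)"
    using A_pos by (simp add: ennreal_mult'[symmetric] nn_integral_cmult[symmetric])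
  also have "\<dots> \<le> ennreal (A * B\<^sup>2) * (ennreal (2 * pi\<^sup>2 * C\<^sub>1) * (\<integral>\<^sup>+p. ennreal \<bar>f p\<bar> \<partial>lborel)
      * (\<integral>\<^sup>+q. ennreal \<bar>g q\<bar> \<partial>lborel))"
    by (intro mult_left_mono nn_integral_gain_integrand_le) simp_all
  also have "\<dots> = ennreal kappa * (\<integral>\<^sup>+p. ennreal \<bar>f p\<bar> \<partial>lborel) * (\<integral>\<^sup>+q. ennreal \<bar>g q\<bar> \<partial>lborel)"
    unfolding kappa_def using A_pos C\<^sub>1_nonneg by (simp add: ennreal_mult mult.assoc)
  finally show ?thesis .
qed

lemma nn_integral_Qplus_div_p0_le:
  assumes [measurable]: "f \<in> borel_measurable borel" "g \<in> borel_measurable borel"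
  shows "(\<integral>\<^sup>+p. ennreal (\<bar>Qplus S A B f g p\<bar> / P p) \<partial>lborel)
     \<le> ennreal kappa * (\<integral>\<^sup>+p. ennreal \<bar>f p\<bar> \<partial>lborel) * (\<integral>\<^sup>+q. ennreal \<bar>g q\<bar> \<partial>lborel)"
proof -
  have "ennreal (\<bar>Qplus S A B f g p\<bar> / P p) \<le> (\<integral>\<^sup>+q. \<integral>\<^sup>+\<theta>. \<integral>\<^sup>+\<phi>.
      ennreal (\<bar>gain_integrand f g p q \<theta> \<phi>\<bar> / P p) \<partial>lborel \<partial>lborel \<partial>lborel)" for p
  proof -
    have "ennreal \<bar>Qplus S A B f g p\<bar>
        \<le> (\<integral>\<^sup>+q. \<integral>\<^sup>+\<theta>. \<integral>\<^sup>+\<phi>. ennreal \<bar>gain_integrand f g p q \<theta> \<phi>\<bar> \<partial>lborel \<partial>lborel \<partial>lborel)"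
      unfolding Qplus_eq_iterated
      by (intro order_trans[OF abs_integral_le_nn_integral] nn_integral_mono)+ simp
    then have "ennreal (1 / P p) * ennreal \<bar>Qplus S A B f g p\<bar> \<le> ennreal (1 / P p) *
        (\<integral>\<^sup>+q. \<integral>\<^sup>+\<theta>. \<integral>\<^sup>+\<phi>. ennreal \<bar>gain_integrand f g p q \<theta> \<phi>\<bar> \<partial>lborel \<partial>lborel \<partial>lborel)"
      by (rule mult_left_mono) simp
    then show ?thesis
      using p0_pos[of A B p]
      by (simp add: ennreal_mult'[symmetric] nn_integral_cmult[symmetric])
  qed
  then have "(\<integral>\<^sup>+p. ennreal (\<bar>Qplus S A B f g p\<bar> / P p) \<partial>lborel)
      \<le> (\<integral>\<^sup>+p. \<integral>\<^sup>+q. \<integral>\<^sup>+\<theta>. \<integral>\<^sup>+\<phi>. ennreal (\<bar>gain_integrand f g p q \<theta> \<phi>\<bar> / P p)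
           \<partial>lborel \<partial>lborel \<partial>lborel \<partial>lborel)"
    by (rule nn_integral_mono)
  also have "\<dots> \<le> ennreal kappa * (\<integral>\<^sup>+p. ennreal \<bar>f p\<bar> \<partial>lborel) * (\<integral>\<^sup>+q. ennreal \<bar>g q\<bar> \<partial>lborel)"
    by (rule nn_integral_gain_integrand_div_p0_le) simp_all
  finally show ?thesis .
qed


lemma integrable_Qplus_div_p0:
  assumes f: "integrable lborel f" and g: "integrable lborel g"
  shows "integrable lborel (\<lambda>p. Qplus S A B f g p / P p)"
    and "L1norm (\<lambda>p. Qplus S A B f g p / P p) \<le> kappa * L1norm f * L1norm g"
proof -
  note fg [measurable] = borel_measurable_if_integrable_lborel[OF f]
    borel_measurable_if_integrable_lborel[OF g]
  note [measurable] = borel_measurable_Qplus[OF fg]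
  have "(\<integral>\<^sup>+p. ennreal \<bar>Qplus S A B f g p / P p\<bar> \<partial>lborel) = (\<integral>\<^sup>+p. ennreal (\<bar>Qplus S A B f g p\<bar> / P p) \<partial>lborel)"
    using p0_pos[of A B] by (simp add: abs_divide abs_of_pos)
  also have "\<dots> \<le> ennreal (kappa * L1norm f * L1norm g)"
    using nn_integral_Qplus_div_p0_le[OF fg] kappa_nonneg L1norm_nonneg
    by (simp add: nn_integral_abs_eq_L1norm[OF f] nn_integral_abs_eq_L1norm[OF g] ennreal_mult)
  finally have "(\<integral>\<^sup>+p. ennreal \<bar>Qplus S A B f g p / P p\<bar> \<partial>lborel) \<le> ennreal (kappa * L1norm f * L1norm g)" .
  from integrable_if_nn_integral_abs_le[OF _ this, folded L1norm_def]
  show "integrable lborel (\<lambda>p. Qplus S A B f g p / P p)"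
    and "L1norm (\<lambda>p. Qplus S A B f g p / P p) \<le> kappa * L1norm f * L1norm g"
    using kappa_nonneg L1norm_nonneg by simp_all
qed

lemma AE_integrable_gain_integrand:
  assumes f: "integrable lborel f" and g: "integrable lborel g"
  shows "AE p in lborel. integrable (lborel \<Otimes>\<^sub>M (lborel \<Otimes>\<^sub>M lborel))
    (\<lambda>(q, \<theta>, \<phi>). gain_integrand f g p q \<theta> \<phi>)"
proof -
  note fg [measurable] = borel_measurable_if_integrable_lborel[OF f]
    borel_measurable_if_integrable_lborel[OF g]
  define F where "F p = (\<integral>\<^sup>+q. \<integral>\<^sup>+\<theta>. \<integral>\<^sup>+\<phi>. ennreal \<bar>gain_integrand f g p q \<theta> \<phi>\<bar> \<partial>lborel \<partial>lborel \<partial>lborel)"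
    for p
  have "(\<integral>\<^sup>+p. ennreal (1 / P p) * F p \<partial>lborel) \<le> ennreal kappa * (\<integral>\<^sup>+p. ennreal \<bar>f p\<bar> \<partial>lborel)
      * (\<integral>\<^sup>+q. ennreal \<bar>g q\<bar> \<partial>lborel)"
  proof -
    have "ennreal (1 / P p) * F p = (\<integral>\<^sup>+q. \<integral>\<^sup>+\<theta>. \<integral>\<^sup>+\<phi>. ennreal (\<bar>gain_integrand f g p q \<theta> \<phi>\<bar> / P p)
        \<partial>lborel \<partial>lborel \<partial>lborel)" for p
      using p0_pos[of A B p] unfolding F_def
      by (simp add: nn_integral_cmult[symmetric] ennreal_mult'[symmetric])
    then show ?thesis using nn_integral_gain_integrand_div_p0_le[OF fg] by simp
  qed
  also have "\<dots> < \<infinity>"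
    by (simp add: nn_integral_abs_eq_L1norm[OF f] nn_integral_abs_eq_L1norm[OF g]
        ennreal_mult_less_top)
  finally have "AE p in lborel. ennreal (1 / P p) * F p \<noteq> \<infinity>"
    by (intro nn_integral_PInf_AE) (simp_all add: F_def)
  then show ?thesis
  proof eventually_elim
    case (elim p)
    then have "F p < \<infinity>"
      using p0_pos[of A B p] by (auto simp: ennreal_mult_eq_top_iff top.not_eq_extremum)
    moreover have "(\<integral>\<^sup>+x. ennreal \<bar>gain_integrand f g p (fst x) (fst (snd x)) (snd (snd x))\<bar>
        \<partial>(lborel \<Otimes>\<^sub>M (lborel \<Otimes>\<^sub>M lborel))) = F p"
      unfolding F_def
      by (simp add: lborel.nn_integral_fst[symmetric] sigma_finite_measure.nn_integral_fst[symmetric]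
          sigma_finite_pair_measure lborel.sigma_finite_measure_axioms)
    ultimately show ?case
      by (subst integrable_iff_bounded) (auto simp: case_prod_beta)
  qed
qed

lemma AE_Qplus_eq_product_integral:
  assumes f: "integrable lborel f" and g: "integrable lborel g"
  shows "AE p in lborel. Qplus S A B f g p
    = integral\<^sup>L (lborel \<Otimes>\<^sub>M (lborel \<Otimes>\<^sub>M lborel)) (\<lambda>(q, \<theta>, \<phi>). gain_integrand f g p q \<theta> \<phi>)"
  using AE_integrable_gain_integrand[OF f g]
proof eventually_elim
  case (elim p)
  note [measurable] = borel_measurable_if_integrable_lborel[OF f] borel_measurable_if_integrable_lborel[OF g]
  have "(\<lambda>(q, \<theta>, \<phi>). gain_integrand f g p q \<theta> \<phi>) \<in> borel_measurable borel"
    unfolding borel_prod[symmetric] case_prod_beta by measurable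
  then show ?case unfolding Qplus_eq_iterated by (rule integral_iterated3_eq_product[OF _ elim])
qed

lemma AE_Qplus_diff_left:
  assumes f1: "integrable lborel f1" and f2: "integrable lborel f2" and g: "integrable lborel g"
  shows "AE p in lborel. Qplus S A B f1 g p - Qplus S A B f2 g p = Qplus S A B (\<lambda>x. f1 x - f2 x) g p"
proof -
  have f12: "integrable lborel (\<lambda>x. f1 x - f2 x)" using f1 f2 by simp
  show ?thesis
    using AE_Qplus_eq_product_integral[OF f1 g] AE_Qplus_eq_product_integral[OF f2 g]
      AE_Qplus_eq_product_integral[OF f12 g]
      AE_integrable_gain_integrand[OF f1 g] AE_integrable_gain_integrand[OF f2 g]
  proof eventually_elim
    case (elim p)
    have "(\<lambda>(q, \<theta>, \<phi>). gain_integrand (\<lambda>x. f1 x - f2 x) g p q \<theta> \<phi>)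
      = (\<lambda>x. (\<lambda>(q, \<theta>, \<phi>). gain_integrand f1 g p q \<theta> \<phi>) x - (\<lambda>(q, \<theta>, \<phi>). gain_integrand f2 g p q \<theta> \<phi>) x)"
      by (auto simp: gain_integrand_def fun_eq_iff algebra_simps)
    then show ?case
      unfolding elim(1-3) using Bochner_Integration.integral_diff[OF elim(4,5)] by simp
  qed
qed

lemma AE_Qplus_diff_right:
  assumes f: "integrable lborel f" and g1: "integrable lborel g1" and g2: "integrable lborel g2"
  shows "AE p in lborel. Qplus S A B f g1 p - Qplus S A B f g2 p = Qplus S A B f (\<lambda>x. g1 x - g2 x) p"
proof -
  have g12: "integrable lborel (\<lambda>x. g1 x - g2 x)" using g1 g2 by simp
  show ?thesis
    using AE_Qplus_eq_product_integral[OF f g1] AE_Qplus_eq_product_integral[OF f g2]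
      AE_Qplus_eq_product_integral[OF f g12]
      AE_integrable_gain_integrand[OF f g1] AE_integrable_gain_integrand[OF f g2]
  proof eventually_elim
    case (elim p)
    have "(\<lambda>(q, \<theta>, \<phi>). gain_integrand f (\<lambda>x. g1 x - g2 x) p q \<theta> \<phi>)
      = (\<lambda>x. (\<lambda>(q, \<theta>, \<phi>). gain_integrand f g1 p q \<theta> \<phi>) x - (\<lambda>(q, \<theta>, \<phi>). gain_integrand f g2 p q \<theta> \<phi>) x)"
      by (auto simp: gain_integrand_def fun_eq_iff algebra_simps)
    then show ?case
      unfolding elim(1-3) using Bochner_Integration.integral_diff[OF elim(4,5)] by simp
  qed
qed


definition sphere_kernel :: "vec3 \<Rightarrow> vec3 \<Rightarrow> real" where
  "sphere_kernel p q = sphere_int A B (coll_kernel p q)"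

definition loss_rate :: "(vec3 \<Rightarrow> real) \<Rightarrow> vec3 \<Rightarrow> real" where
  "loss_rate g p = Qminus S A B (\<lambda>_. 1) g p"

lemma sphere_kernel_nonneg: "0 \<le> sphere_kernel p q"
  unfolding sphere_kernel_def sphere_int_eq
  by (intro integral_nonneg_AE AE_I2 mult_nonneg_nonneg sphere_density_nonneg coll_kernel_nonneg)

lemma sphere_kernel_le: "sphere_kernel p q \<le> 2 * pi\<^sup>2 * C\<^sub>1"
proof -
  have "ennreal \<bar>sphere_kernel p q\<bar>
      \<le> (\<integral>\<^sup>+\<theta>. \<integral>\<^sup>+\<phi>. ennreal (sphere_density \<theta> \<phi>) * ennreal C\<^sub>1 \<partial>lborel \<partial>lborel)"
    unfolding sphere_kernel_def
    using sphere_density_nonneg coll_kernel_le coll_kernel_nonneg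
    by (intro order_trans[OF abs_sphere_int_le] nn_integral_mono)
      (simp add: ennreal_mult'[symmetric] mult_left_mono ennreal_leI)
  also have "\<dots> \<le> ennreal (2 * pi\<^sup>2) * ennreal C\<^sub>1"
    by (simp add: nn_integral_multc mult_right_mono nn_integral_sphere_density_le)
  finally show ?thesis
    using C\<^sub>1_nonneg by (simp add: ennreal_mult[symmetric] ennreal_le_iff)
qed

lemma borel_measurable_sphere_kernel [measurable]:
  assumes "f \<in> borel_measurable M" "g \<in> borel_measurable M"
  shows "(\<lambda>x. sphere_kernel (f x) (g x)) \<in> borel_measurable M"
proof (rule measurable_compose_uncurry2[OF _ assms])
  show "(\<lambda>(p, q). sphere_kernel p q) \<in> borel_measurable borel"
    unfolding sphere_kernel_def sphere_int_eq case_prod_beta borel_prod[symmetric] by measurable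
qed

lemma loss_rate_eq: "loss_rate g p = (LINT q|lborel. A * B\<^sup>2 / P q * g q * sphere_kernel p q)"
  unfolding loss_rate_def Qminus_def sphere_kernel_def coll_kernel_def
  by (rule Bochner_Integration.integral_cong) (simp_all add: sphere_int_cmult[symmetric] ac_simps)

lemma Qminus_eq_mult_loss_rate: "Qminus S A B f g p = f p * loss_rate g p"
proof -
  have "Qminus S A B f g p = (LINT q|lborel. f p * (A * B\<^sup>2 / P q * g q * sphere_kernel p q))"
    unfolding Qminus_def sphere_kernel_def coll_kernel_def
    by (rule Bochner_Integration.integral_cong) (simp_all add: sphere_int_cmult[symmetric] ac_simps)
  also have "\<dots> = f p * loss_rate g p"
    unfolding loss_rate_eq by (rule integral_mult_right_zero)
  finally show ?thesis .
qed

lemma Qcoll_eq: "Qcoll S A B f f p = Qplus S A B f f p - f p * loss_rate f p"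
  by (simp add: Qcoll_def Qminus_eq_mult_loss_rate)

lemma loss_weight_nonneg: "0 \<le> A * B\<^sup>2 / P q"
  using A_pos p0_pos[of A B q] by simp

lemma abs_loss_integrand_le: "\<bar>A * B\<^sup>2 / P q * g q * sphere_kernel p q\<bar> \<le> kappa * \<bar>g q\<bar>"
proof -
  have "A * B\<^sup>2 * 1 \<le> A * B\<^sup>2 * P q"
    using A_pos by (intro mult_left_mono p0_ge_1) simp
  then have "A * B\<^sup>2 / P q \<le> A * B\<^sup>2" using p0_pos[of A B q] by (simp add: divide_le_eq)
  then have "A * B\<^sup>2 / P q * sphere_kernel p q * \<bar>g q\<bar> \<le> A * B\<^sup>2 * (2 * pi\<^sup>2 * C\<^sub>1) * \<bar>g q\<bar>"
    by (intro mult_right_mono mult_mono sphere_kernel_le sphere_kernel_nonneg loss_weight_nonneg)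
      (use A_pos in auto)
  then show ?thesis
    using loss_weight_nonneg[of q] sphere_kernel_nonneg[of p q] A_pos p0_pos[of A B q]
    by (simp add: kappa_def abs_mult ac_simps)
qed

lemma integrable_loss_integrand:
  assumes g: "integrable lborel g"
  shows "integrable lborel (\<lambda>q. A * B\<^sup>2 / P q * g q * sphere_kernel p q)"
proof (rule Bochner_Integration.integrable_bound[where f="\<lambda>q. kappa * g q"])
  note [measurable] = borel_measurable_if_integrable_lborel[OF g]
  show "(\<lambda>q. A * B\<^sup>2 / P q * g q * sphere_kernel p q) \<in> borel_measurable lborel" by measurable
  show "AE q in lborel. norm (A * B\<^sup>2 / P q * g q * sphere_kernel p q) \<le> norm (kappa * g q)"
    using abs_loss_integrand_le kappa_nonneg by (simp add: abs_mult)
qed (use g in simp)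

lemma abs_loss_rate_le:
  assumes g: "integrable lborel g"
  shows "\<bar>loss_rate g p\<bar> \<le> kappa * L1norm g"
proof -
  have "\<bar>loss_rate g p\<bar> \<le> (LINT q|lborel. \<bar>A * B\<^sup>2 / P q * g q * sphere_kernel p q\<bar>)"
    unfolding loss_rate_eq by (rule integral_abs_bound)
  also have "\<dots> \<le> (LINT q|lborel. kappa * \<bar>g q\<bar>)"
    by (rule integral_mono[OF integrable_abs[OF integrable_loss_integrand[OF g]]])
      (use g abs_loss_integrand_le in auto)
  finally show ?thesis by (simp add: L1norm_def)
qed

lemma loss_rate_nonneg:
  assumes "AE q in lborel. 0 \<le> g q"
  shows "0 \<le> loss_rate g p"
  unfolding loss_rate_eq using assms
  by (intro integral_nonneg_AE, eventually_elim)
    (intro mult_nonneg_nonneg loss_weight_nonneg sphere_kernel_nonneg)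

lemma loss_rate_diff:
  assumes g1: "integrable lborel g1" and g2: "integrable lborel g2"
  shows "loss_rate g1 p - loss_rate g2 p = loss_rate (\<lambda>x. g1 x - g2 x) p"
proof -
  have "loss_rate (\<lambda>x. g1 x - g2 x) p = (LINT q|lborel. A * B\<^sup>2 / P q * g1 q * sphere_kernel p q
      - A * B\<^sup>2 / P q * g2 q * sphere_kernel p q)"
    unfolding loss_rate_eq by (simp only: right_diff_distrib left_diff_distrib)
  also have "\<dots> = loss_rate g1 p - loss_rate g2 p"
    unfolding loss_rate_eq
    by (rule Bochner_Integration.integral_diff[OF integrable_loss_integrand[OF g1]
          integrable_loss_integrand[OF g2]])
  finally show ?thesis by simp
qed

lemma borel_measurable_loss_rate:
  assumes [measurable]: "g \<in> borel_measurable borel"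
  shows "loss_rate g \<in> borel_measurable borel"
  unfolding loss_rate_eq[abs_def] by measurable

end

section \<open>Uniqueness and existence of solutions\<close>

lemma solution_difference_bound:
  fixes \<sigma> P u w v Quu Qww Qdu Qwd \<nu>u \<nu>w \<nu>d a b :: real
  assumes P: "1 \<le> P" and \<sigma>: "0 \<le> \<sigma>"
    and u: "\<sigma> * u - (Quu - u * \<nu>u) / P = v" and w: "\<sigma> * w - (Qww - w * \<nu>w) / P = v"
    and Q: "Quu - Qww = Qdu + Qwd" and \<nu>: "\<nu>u - \<nu>w = \<nu>d"
    and a: "\<bar>\<nu>u\<bar> \<le> a" and b: "\<bar>\<nu>d\<bar> \<le> b"
  shows "\<sigma> * \<bar>u - w\<bar> \<le> \<bar>Qdu / P\<bar> + \<bar>Qwd / P\<bar> + a * \<bar>u - w\<bar> + b * \<bar>w\<bar>"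
proof -
  have shrink: "\<bar>x / P\<bar> \<le> \<bar>x\<bar>" for x
    using P mult_left_mono[OF P, of "\<bar>x\<bar>"] by (simp add: divide_le_eq abs_divide)
  have Q': "Quu = Qdu + Qwd + Qww" using Q by simp
  from u w have "\<sigma> * (u - w) = (Quu - u * \<nu>u) / P - (Qww - w * \<nu>w) / P"
    by (simp add: right_diff_distrib)
  also have "\<dots> = Qdu / P + Qwd / P - ((u - w) * \<nu>u) / P - (w * \<nu>d) / P"
    unfolding Q' \<nu>[symmetric] using P by (simp add: field_simps)
  finally have "\<bar>\<sigma> * (u - w)\<bar> = \<bar>Qdu / P + Qwd / P - ((u - w) * \<nu>u) / P - (w * \<nu>d) / P\<bar>"
    by simp
  then have "\<sigma> * \<bar>u - w\<bar> = \<bar>Qdu / P + Qwd / P - ((u - w) * \<nu>u) / P - (w * \<nu>d) / P\<bar>"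
    using \<sigma> by (simp add: abs_mult)
  also have "\<dots> \<le> \<bar>Qdu / P\<bar> + \<bar>Qwd / P\<bar> + \<bar>((u - w) * \<nu>u) / P\<bar> + \<bar>(w * \<nu>d) / P\<bar>"
    using abs_triangle_ineq[of "Qdu / P" "Qwd / P"] abs_triangle_ineq4[of "Qdu / P + Qwd / P" "(u - w) * \<nu>u / P"]
      abs_triangle_ineq4[of "Qdu / P + Qwd / P - (u - w) * \<nu>u / P" "w * \<nu>d / P"]
    by linarith
  also have "\<dots> \<le> \<bar>Qdu / P\<bar> + \<bar>Qwd / P\<bar> + \<bar>(u - w) * \<nu>u\<bar> + \<bar>w * \<nu>d\<bar>"
    using shrink[of "(u - w) * \<nu>u"] shrink[of "w * \<nu>d"] by linarith
  also have "\<dots> \<le> \<bar>Qdu / P\<bar> + \<bar>Qwd / P\<bar> + a * \<bar>u - w\<bar> + b * \<bar>w\<bar>"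
    using mult_left_mono[OF a, of "\<bar>u - w\<bar>"] mult_left_mono[OF b, of "\<bar>w\<bar>"]
    by (simp add: abs_mult mult.commute)
  finally show ?thesis .
qed

context collision_kernel
begin

lemma L1norm_solution_difference_le:
  fixes u w v :: "vec3 \<Rightarrow> real" and \<sigma> :: real
  assumes u: "integrable lborel u" and w: "integrable lborel w" and \<sigma>: "0 \<le> \<sigma>"
    and su: "AE p in lborel. \<sigma> * u p - Qcoll S A B u u p / P p = v p"
    and sw: "AE p in lborel. \<sigma> * w p - Qcoll S A B w w p / P p = v p"
  shows "\<sigma> * L1norm (\<lambda>p. u p - w p) \<le> 2 * kappa * (L1norm u + L1norm w) * L1norm (\<lambda>p. u p - w p)"
proof -
  define d where "d = (\<lambda>p. u p - w p)"
  have d: "integrable lborel d" unfolding d_def using u w by simp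
  have ae: "AE p in lborel. \<sigma> * \<bar>d p\<bar> \<le> \<bar>Qplus S A B d u p / P p\<bar> + \<bar>Qplus S A B w d p / P p\<bar>
        + (kappa * L1norm u) * \<bar>d p\<bar> + (kappa * L1norm d) * \<bar>w p\<bar>"
    using su sw AE_Qplus_diff_left[OF u w u] AE_Qplus_diff_right[OF w u w]
  proof eventually_elim
    case (elim p)
    show ?case unfolding d_def
    proof (rule solution_difference_bound[OF p0_ge_1 \<sigma>])
      show "\<sigma> * u p - (Qplus S A B u u p - u p * loss_rate u p) / P p = v p"
        "\<sigma> * w p - (Qplus S A B w w p - w p * loss_rate w p) / P p = v p"
        using elim(1,2) by (simp_all add: Qcoll_eq)
      show "Qplus S A B u u p - Qplus S A B w w p
          = Qplus S A B (\<lambda>x. u x - w x) u p + Qplus S A B w (\<lambda>x. u x - w x) p"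
        using elim(3,4) by simp
      show "loss_rate u p - loss_rate w p = loss_rate (\<lambda>x. u x - w x) p"
        by (rule loss_rate_diff[OF u w])
      show "\<bar>loss_rate u p\<bar> \<le> kappa * L1norm u" by (rule abs_loss_rate_le[OF u])
      show "\<bar>loss_rate (\<lambda>x. u x - w x) p\<bar> \<le> kappa * L1norm (\<lambda>x. u x - w x)"
        using abs_loss_rate_le[OF d] unfolding d_def .
    qed
  qed
  note i = integrable_Qplus_div_p0(1)[OF d u] integrable_Qplus_div_p0(1)[OF w d]
  have "\<sigma> * L1norm d = (LINT p|lborel. \<sigma> * \<bar>d p\<bar>)" by (simp add: L1norm_def)
  also have "\<dots> \<le> (LINT p|lborel. \<bar>Qplus S A B d u p / P p\<bar> + \<bar>Qplus S A B w d p / P p\<bar>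
        + (kappa * L1norm u) * \<bar>d p\<bar> + (kappa * L1norm d) * \<bar>w p\<bar>)"
    by (rule integral_mono_AE[OF _ _ ae])
      (intro Bochner_Integration.integrable_add integrable_abs integrable_mult_right i d w)+
  also have "\<dots> = L1norm (\<lambda>p. Qplus S A B d u p / P p) + L1norm (\<lambda>p. Qplus S A B w d p / P p)
        + (kappa * L1norm u) * L1norm d + (kappa * L1norm d) * L1norm w"
    using integrable_abs[OF i(1)] integrable_abs[OF i(2)] integrable_abs[OF d] integrable_abs[OF w]
    by (simp add: L1norm_def del: abs_divide)
  also have "\<dots> \<le> 2 * kappa * (L1norm u + L1norm w) * L1norm d"
    using integrable_Qplus_div_p0(2)[OF d u] integrable_Qplus_div_p0(2)[OF w d]
    by (simp add: algebra_simps)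
  finally show ?thesis unfolding d_def .
qed

lemma solution_unique:
  fixes u w v :: "vec3 \<Rightarrow> real" and \<sigma> r :: real
  assumes "u \<in> Xr r" "w \<in> Xr r" and big: "4 * kappa * r < \<sigma>"
    and su: "AE p in lborel. \<sigma> * u p - Qcoll S A B u u p / P p = v p"
    and sw: "AE p in lborel. \<sigma> * w p - Qcoll S A B w w p / P p = v p"
  shows "AE p in lborel. w p = u p"
proof -
  have u: "integrable lborel u" "L1norm u \<le> r" and w: "integrable lborel w" "L1norm w \<le> r"
    using assms(1,2) by (auto simp: Xr_def)
  have "0 \<le> 4 * kappa * r" using kappa_nonneg L1norm_nonneg[of u] u(2) by simp
  then have \<sigma>: "0 \<le> \<sigma>" using big by linarith
  have "\<sigma> * L1norm (\<lambda>p. u p - w p) \<le> 2 * kappa * (L1norm u + L1norm w) * L1norm (\<lambda>p. u p - w p)"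
    by (rule L1norm_solution_difference_le[OF u(1) w(1) \<sigma> su sw])
  also have "\<dots> \<le> 4 * kappa * r * L1norm (\<lambda>p. u p - w p)"
  proof (rule mult_right_mono[OF _ L1norm_nonneg])
    show "2 * kappa * (L1norm u + L1norm w) \<le> 4 * kappa * r"
      using mult_left_mono[of "L1norm u + L1norm w" "2 * r" kappa] u(2) w(2) kappa_nonneg
      by (simp add: ac_simps)
  qed
  finally have "L1norm (\<lambda>p. u p - w p) \<le> 0"
    using big by (metis mult_le_cancel_right not_le order.strict_iff_not)
  then show ?thesis using AE_eq_if_L1norm_diff_nonpos[OF u(1) w(1)] by (auto elim: AE_mp)
qed

end

lemma abs_quotient_diff_le:
  fixes x x' y y' s :: real
  assumes "0 \<le> x'" "s \<le> y" "s \<le> y'" "0 < s"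
  shows "\<bar>x / y - x' / y'\<bar> \<le> \<bar>x - x'\<bar> / s + x' * \<bar>y - y'\<bar> / s\<^sup>2"
proof -
  have y: "0 < y" and y': "0 < y'" using assms by auto
  have "x / y - x' / y' = (x - x') / y + x' * (y' - y) / (y * y')"
    using y y' by (simp add: field_simps)
  moreover have "\<bar>(x - x') / y\<bar> \<le> \<bar>x - x'\<bar> / s"
    using y assms by (simp add: abs_divide frac_le)
  moreover have "s\<^sup>2 \<le> y * y'" using assms by (simp add: power2_eq_square mult_mono)
  then have "\<bar>x' * (y' - y) / (y * y')\<bar> \<le> x' * \<bar>y - y'\<bar> / s\<^sup>2"
    using y y' assms by (simp add: abs_divide abs_mult frac_le abs_minus_commute)
  ultimately show ?thesis
    using abs_triangle_ineq[of "(x - x') / y" "x' * (y' - y) / (y * y')"] by linarith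
qed

locale fixed_point_problem = collision_kernel +
  fixes r \<sigma> :: real and v :: "vec3 \<Rightarrow> real"
  assumes r_pos: "r > 0" and v: "v \<in> Xr r"
    and \<sigma>_large: "1 + 6 * kappa * r + 2 * kappa\<^sup>2 * r\<^sup>2 \<le> \<sigma>"
begin

text \<open>\<open>v\<close> is nonnegative only almost everywhere; its positive part keeps all iterates of \<open>\<Phi>\<close>
  nonnegative everywhere.\<close>
definition "vplus p = max (v p) 0"
definition "gain_part u p = vplus p + Qplus S A B u u p / P p"
definition "damping u p = \<sigma> + loss_rate u p / P p"

text \<open>By \<open>Qcoll_eq\<close>, \<open>\<sigma> u - Qcoll u u / p\<^sup>0 = v\<close> says \<open>u \<cdot> damping u = v + Qplus u u / p\<^sup>0\<close>,
  so solutions are the fixed points of \<open>\<Phi>\<close>.  Dividing by the damping term keeps \<open>\<Phi>\<close> positive.\<close>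
definition "\<Phi> u p = gain_part u p / damping u p"

definition "admissible u \<longleftrightarrow> integrable lborel u \<and> (\<forall>p. 0 \<le> u p) \<and> L1norm u \<le> r"

lemma \<sigma>_ge_1: "1 \<le> \<sigma>"
  using \<sigma>_large kappa_nonneg r_pos by (smt (verit) mult_nonneg_nonneg zero_le_power2)

lemma vplus_properties:
  "integrable lborel vplus" "AE p in lborel. vplus p = v p" "L1norm vplus \<le> r" "0 \<le> vplus p"
proof -
  have v: "integrable lborel v" "AE p in lborel. 0 \<le> v p" "L1norm v \<le> r"
    using v by (auto simp: Xr_def)
  show int: "integrable lborel vplus"
    using integrable_max[OF v(1) integrable_zero] by (simp add: vplus_def[abs_def])
  show ae: "AE p in lborel. vplus p = v p" using v(2) by eventually_elim (simp add: vplus_def)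
  have "L1norm vplus = L1norm v"
    unfolding L1norm_def by (rule integral_cong_AE) (use int v(1) ae in \<open>auto elim: AE_mp\<close>)
  then show "L1norm vplus \<le> r" using v(3) by simp
  show "0 \<le> vplus p" by (simp add: vplus_def)
qed

lemma admissible_nonneg_parts:
  assumes "admissible u"
  shows "0 \<le> loss_rate u p" "\<sigma> \<le> damping u p" "0 \<le> gain_part u p"
proof -
  show "0 \<le> loss_rate u p" using assms unfolding admissible_def by (intro loss_rate_nonneg AE_I2) auto
  then show "\<sigma> \<le> damping u p" unfolding damping_def using p0_pos[of A B p] by simp
  have "0 \<le> Qplus S A B u u p" using assms unfolding admissible_def by (intro Qplus_nonneg) auto
  then show "0 \<le> gain_part u p"
    unfolding gain_part_def using p0_pos[of A B p] vplus_properties(4) by simp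
qed

lemma admissible_gain_part:
  assumes "admissible u"
  shows "integrable lborel (gain_part u)" "L1norm (gain_part u) \<le> r + kappa * r\<^sup>2"
proof -
  have u: "integrable lborel u" "L1norm u \<le> r" using assms by (auto simp: admissible_def)
  note Q = integrable_Qplus_div_p0[OF u(1) u(1)]
  show "integrable lborel (gain_part u)"
    unfolding gain_part_def[abs_def] using vplus_properties(1) Q(1) by simp
  have "L1norm (gain_part u) = (LINT p|lborel. vplus p + Qplus S A B u u p / P p)"
    unfolding L1norm_def gain_part_def
    by (rule Bochner_Integration.integral_cong) (use admissible_nonneg_parts(3)[OF assms] in
        \<open>auto simp: gain_part_def\<close>)
  also have "\<dots> = (LINT p|lborel. vplus p) + (LINT p|lborel. Qplus S A B u u p / P p)"
    using vplus_properties(1) Q(1) by simp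
  also have "\<dots> \<le> L1norm vplus + L1norm (\<lambda>p. Qplus S A B u u p / P p)"
    unfolding L1norm_def
    by (intro add_mono integral_mono integrable_abs vplus_properties(1) Q(1))
      (simp_all del: abs_divide)
  also have "\<dots> \<le> r + kappa * L1norm u * L1norm u" using vplus_properties(3) Q(2) by simp
  also have "\<dots> \<le> r + kappa * r\<^sup>2"
    using u(2) L1norm_nonneg[of u] kappa_nonneg
    by (simp add: power2_eq_square mult.assoc mult_left_mono mult_mono)
  finally show "L1norm (gain_part u) \<le> r + kappa * r\<^sup>2" .
qed

lemma borel_measurable_\<Phi>:
  assumes "admissible u"
  shows "\<Phi> u \<in> borel_measurable borel"
proof -
  note [measurable] = borel_measurable_if_integrable_lborel[OF vplus_properties(1)]
    borel_measurable_if_integrable_lborel[of u]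
  have [measurable]: "u \<in> borel_measurable borel"
    using assms borel_measurable_if_integrable_lborel unfolding admissible_def by blast
  show ?thesis unfolding \<Phi>_def[abs_def] gain_part_def damping_def
    using borel_measurable_Qplus[of u u] borel_measurable_loss_rate[of u] by measurable
qed

lemma admissible_\<Phi>:
  assumes u: "admissible u"
  shows "admissible (\<Phi> u)"
proof -
  note gain = admissible_gain_part[OF u] and parts = admissible_nonneg_parts[OF u]
  have bound: "\<bar>\<Phi> u p\<bar> \<le> gain_part u p / \<sigma>" for p
    unfolding \<Phi>_def using parts[of p] \<sigma>_ge_1 by (simp add: abs_divide frac_le)
  have int: "integrable lborel (\<Phi> u)"
  proof (rule Bochner_Integration.integrable_bound[where f="\<lambda>p. gain_part u p / \<sigma>"])
    show "\<Phi> u \<in> borel_measurable lborel" using borel_measurable_\<Phi>[OF u] by simp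
    show "AE p in lborel. norm (\<Phi> u p) \<le> norm (gain_part u p / \<sigma>)"
      using bound parts(3) \<sigma>_ge_1 by (auto intro!: AE_I2 simp: abs_divide)
  qed (use gain(1) in simp)
  have "L1norm (\<Phi> u) \<le> (LINT p|lborel. gain_part u p / \<sigma>)"
    unfolding L1norm_def by (rule integral_mono) (use int gain(1) bound in auto)
  also have "\<dots> = L1norm (gain_part u) / \<sigma>"
    unfolding L1norm_def using parts(3) by simp
  also have "\<dots> \<le> (r + kappa * r\<^sup>2) / \<sigma>"
    using gain(2) \<sigma>_ge_1 by (simp add: divide_right_mono)
  also have "\<dots> \<le> r"
  proof -
    have "r + kappa * r\<^sup>2 = r * (1 + kappa * r)" by (simp add: power2_eq_square algebra_simps)
    also have "\<dots> \<le> r * \<sigma>"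
      using \<sigma>_large kappa_nonneg r_pos
      by (intro mult_left_mono) (auto intro: order_trans[rotated] simp: mult_nonneg_nonneg)
    finally show ?thesis using \<sigma>_ge_1 by (simp add: divide_le_eq)
  qed
  finally have "L1norm (\<Phi> u) \<le> r" .
  moreover have "0 \<le> \<Phi> u p" for p
    unfolding \<Phi>_def using parts[of p] \<sigma>_ge_1 by simp
  ultimately show ?thesis unfolding admissible_def using int by blast
qed


lemma AE_abs_\<Phi>_diff_le:
  assumes u: "admissible u" and w: "admissible w"
  defines "d \<equiv> \<lambda>x. u x - w x"
  shows "AE p in lborel. \<bar>\<Phi> u p - \<Phi> w p\<bar>
    \<le> (\<bar>Qplus S A B d u p / P p\<bar> + \<bar>Qplus S A B w d p / P p\<bar>) / \<sigma>
      + gain_part w p * (kappa * L1norm d) / \<sigma>\<^sup>2"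
proof -
  have ui: "integrable lborel u" and wi: "integrable lborel w"
    using u w by (auto simp: admissible_def)
  have di: "integrable lborel d" unfolding d_def using ui wi by simp
  show ?thesis
    using AE_Qplus_diff_left[OF ui wi ui] AE_Qplus_diff_right[OF wi ui wi]
  proof eventually_elim
    case (elim p)
    have "gain_part u p - gain_part w p = Qplus S A B d u p / P p + Qplus S A B w d p / P p"
      unfolding gain_part_def d_def using elim by (simp add: diff_divide_distrib[symmetric]
          add_divide_distrib[symmetric])
    then have gain: "\<bar>gain_part u p - gain_part w p\<bar> \<le> \<bar>Qplus S A B d u p / P p\<bar> + \<bar>Qplus S A B w d p / P p\<bar>"
      by (simp only: abs_triangle_ineq)
    have "damping u p - damping w p = loss_rate d p / P p"
      unfolding damping_def d_def using loss_rate_diff[OF ui wi, of p] by (simp add: diff_divide_distrib[symmetric])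
    then have "\<bar>damping u p - damping w p\<bar> \<le> \<bar>loss_rate d p\<bar>"
      using p0_ge_1[of A B p] by (simp add: abs_divide divide_le_eq mult_le_cancel_left1 abs_le_self_iff)
    also have "\<dots> \<le> kappa * L1norm d" by (rule abs_loss_rate_le[OF di])
    finally have damp: "\<bar>damping u p - damping w p\<bar> \<le> kappa * L1norm d" .
    have "\<bar>\<Phi> u p - \<Phi> w p\<bar> \<le> \<bar>gain_part u p - gain_part w p\<bar> / \<sigma>
        + gain_part w p * \<bar>damping u p - damping w p\<bar> / \<sigma>\<^sup>2"
      unfolding \<Phi>_def using admissible_nonneg_parts[OF u] admissible_nonneg_parts[OF w] \<sigma>_ge_1
      by (intro abs_quotient_diff_le) auto
    also have "\<dots> \<le> (\<bar>Qplus S A B d u p / P p\<bar> + \<bar>Qplus S A B w d p / P p\<bar>) / \<sigma>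
        + gain_part w p * (kappa * L1norm d) / \<sigma>\<^sup>2"
      using admissible_nonneg_parts(3)[OF w] \<sigma>_ge_1
      by (intro add_mono divide_right_mono mult_left_mono gain damp) auto
    finally show ?case .
  qed
qed

text \<open>The choice of \<open>\<sigma>\<close> in the assumptions is what makes the Lipschitz constant
  \<open>(3 \<kappa> r + \<kappa>\<^sup>2 r\<^sup>2) / \<sigma>\<close> at most \<open>1/2\<close>.\<close>
lemma \<Phi>_contraction:
  assumes u: "admissible u" and w: "admissible w"
  shows "L1norm (\<lambda>p. \<Phi> u p - \<Phi> w p) \<le> 1/2 * L1norm (\<lambda>p. u p - w p)"
proof -
  define d where "d = (\<lambda>x. u x - w x)"
  have ui: "integrable lborel u" "L1norm u \<le> r" and wi: "integrable lborel w" "L1norm w \<le> r"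
    using u w by (auto simp: admissible_def)
  have di: "integrable lborel d" unfolding d_def using ui wi by simp
  note Q = integrable_Qplus_div_p0[OF di ui(1)] integrable_Qplus_div_p0[OF wi(1) di]
  note gain = admissible_gain_part[OF w]
  have \<sigma>: "0 < \<sigma>" "\<sigma> \<le> \<sigma>\<^sup>2" using \<sigma>_ge_1 by (auto simp: power2_eq_square)
  have int\<Phi>: "integrable lborel (\<lambda>p. \<Phi> u p - \<Phi> w p)"
    using admissible_\<Phi>[OF u] admissible_\<Phi>[OF w] by (simp add: admissible_def)
  have "L1norm (\<lambda>p. \<Phi> u p - \<Phi> w p) \<le> (LINT p|lborel. (\<bar>Qplus S A B d u p / P p\<bar>
      + \<bar>Qplus S A B w d p / P p\<bar>) / \<sigma> + gain_part w p * (kappa * L1norm d) / \<sigma>\<^sup>2)"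
    unfolding L1norm_def[of "\<lambda>p. \<Phi> u p - \<Phi> w p"]
    by (rule integral_mono_AE[OF integrable_abs[OF int\<Phi>] _ AE_abs_\<Phi>_diff_le[OF u w, folded d_def]])
      (intro Bochner_Integration.integrable_add integrable_divide integrable_mult_left
        integrable_abs Q(1) Q(3) gain(1))
  also have "\<dots> = (L1norm (\<lambda>p. Qplus S A B d u p / P p) + L1norm (\<lambda>p. Qplus S A B w d p / P p)) / \<sigma>
      + L1norm (gain_part w) * (kappa * L1norm d) / \<sigma>\<^sup>2"
    using integrable_abs[OF Q(1)] integrable_abs[OF Q(3)] gain(1) admissible_nonneg_parts(3)[OF w]
    by (simp add: L1norm_def del: abs_divide)
  also have "\<dots> \<le> (kappa * L1norm d * r + kappa * r * L1norm d) / \<sigma>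
      + (r + kappa * r\<^sup>2) * (kappa * L1norm d) / \<sigma>"
  proof (rule add_mono)
    have "kappa * L1norm d * L1norm u \<le> kappa * L1norm d * r"
      by (intro mult_left_mono ui(2) mult_nonneg_nonneg kappa_nonneg L1norm_nonneg)
    moreover have "kappa * L1norm w * L1norm d \<le> kappa * r * L1norm d"
      by (intro mult_right_mono mult_left_mono wi(2) kappa_nonneg L1norm_nonneg)
    ultimately show "(L1norm (\<lambda>p. Qplus S A B d u p / P p) + L1norm (\<lambda>p. Qplus S A B w d p / P p)) / \<sigma>
        \<le> (kappa * L1norm d * r + kappa * r * L1norm d) / \<sigma>"
      using Q(2,4) \<sigma> by (intro divide_right_mono) linarith+
    show "L1norm (gain_part w) * (kappa * L1norm d) / \<sigma>\<^sup>2 \<le> (r + kappa * r\<^sup>2) * (kappa * L1norm d) / \<sigma>"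
      using gain(2) \<sigma> kappa_nonneg L1norm_nonneg[of d] L1norm_nonneg[of "gain_part w"]
      by (intro divide_mono mult_right_mono) auto
  qed
  also have "\<dots> = L1norm d * ((3 * kappa * r + kappa\<^sup>2 * r\<^sup>2) / \<sigma>)"
    using \<sigma> by (simp add: power2_eq_square field_simps)
  also have "\<dots> \<le> L1norm d * (1/2)"
    using \<sigma>_large \<sigma> by (intro mult_left_mono L1norm_nonneg) (simp add: divide_le_eq)
  finally show ?thesis unfolding d_def by simp
qed


definition "iterate k = (\<Phi> ^^ k) (\<lambda>_. 0)"

lemma iterate_Suc: "iterate (Suc k) = \<Phi> (iterate k)"
  by (simp add: iterate_def)

lemma admissible_iterate: "admissible (iterate k)"
proof (induction k)
  case 0
  show ?case using r_pos by (simp add: iterate_def admissible_def L1norm_def)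
qed (simp add: iterate_Suc admissible_\<Phi>)

lemma L1norm_iterate_step_le: "L1norm (\<lambda>p. iterate (Suc k) p - iterate k p) \<le> r * (1/2)^k"
proof (induction k)
  case 0
  show ?case using admissible_iterate[of 1] by (simp add: iterate_def admissible_def)
next
  case (Suc k)
  have "L1norm (\<lambda>p. iterate (Suc (Suc k)) p - iterate (Suc k) p)
      \<le> 1/2 * L1norm (\<lambda>p. iterate (Suc k) p - iterate k p)"
    unfolding iterate_Suc by (intro \<Phi>_contraction admissible_\<Phi> admissible_iterate)
  then show ?case using Suc by simp
qed

text \<open>The iterates converge only almost everywhere, and \<open>lim\<close> is arbitrary elsewhere; taking the
  positive part makes \<open>limit\<close> admissible without changing it almost everywhere.\<close>
definition "limit p = max 0 (lim (\<lambda>k. iterate k p))"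

lemma limit_approx:
  shows "integrable lborel (\<lambda>p. limit p - iterate k p)"
    and "L1norm (\<lambda>p. limit p - iterate k p) \<le> 2 * r * (1/2)^k"
proof -
  have int: "integrable lborel (iterate k)" for k
    using admissible_iterate by (simp add: admissible_def)
  note [measurable] = borel_measurable_if_integrable_lborel[OF int]
  note lim = L1_limit_of_geometric_increments[OF int L1norm_iterate_step_le[unfolded L1norm_def],
      folded L1norm_def]
  have ae: "AE p in lborel. lim (\<lambda>k. iterate k p) - iterate k p = limit p - iterate k p"
    using lim(1)
  proof eventually_elim
    case (elim p)
    have "0 \<le> lim (\<lambda>k. iterate k p)"
      using admissible_iterate by (intro LIMSEQ_le_const[OF elim]) (auto simp: admissible_def)
    then show ?case by (simp add: limit_def)
  qed
  have [measurable]: "limit \<in> borel_measurable borel"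
    unfolding limit_def[abs_def] by measurable
  have meas: "(\<lambda>p. limit p - iterate k p) \<in> borel_measurable lborel"
    by measurable
  show "integrable lborel (\<lambda>p. limit p - iterate k p)"
    by (rule integrable_cong_AE_imp[OF lim(2) meas ae])
  have "L1norm (\<lambda>p. limit p - iterate k p) = L1norm (\<lambda>p. lim (\<lambda>k. iterate k p) - iterate k p)"
    unfolding L1norm_def using ae by (intro integral_cong_AE) (measurable, auto elim: AE_mp)
  then show "L1norm (\<lambda>p. limit p - iterate k p) \<le> 2 * r * (1/2)^k" using lim(3) by simp
qed

lemma admissible_limit: "admissible limit"
proof -
  have int: "integrable lborel limit"
    using limit_approx(1)[of 0] by (simp add: iterate_def)
  have "L1norm limit - r \<le> 2 * r * (1/2)^k" for k
  proof -
    have "L1norm limit \<le> L1norm (\<lambda>p. limit p - iterate k p) + L1norm (\<lambda>p. iterate k p - 0)"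
      using L1norm_triangle[OF int, of "iterate k" "\<lambda>_. 0"] admissible_iterate[of k]
      by (simp add: admissible_def)
    then show ?thesis using limit_approx(2)[of k] admissible_iterate[of k] by (simp add: admissible_def)
  qed
  then have "L1norm limit - r \<le> 0" by (intro nonpos_if_le_geometric_half[of _ "2 * r"]) (simp add: mult.assoc)
  then show ?thesis using int by (simp add: admissible_def limit_def)
qed

lemma limit_fixed_point: "AE p in lborel. limit p = \<Phi> limit p"
proof -
  have int: "integrable lborel limit" "integrable lborel (\<Phi> limit)"
    using admissible_limit admissible_\<Phi>[OF admissible_limit] by (simp_all add: admissible_def)
  have "L1norm (\<lambda>p. limit p - \<Phi> limit p) \<le> 2 * r * (1/2)^k" for k
  proof -
    have "L1norm (\<lambda>p. limit p - \<Phi> limit p)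
        \<le> L1norm (\<lambda>p. limit p - iterate (Suc k) p) + L1norm (\<lambda>p. \<Phi> (iterate k) p - \<Phi> limit p)"
      using L1norm_triangle[OF int(1) _ int(2), of "iterate (Suc k)"] admissible_iterate[of "Suc k"]
      unfolding admissible_def iterate_Suc by blast
    also have "\<dots> \<le> 2 * r * (1/2)^Suc k + 1/2 * L1norm (\<lambda>p. limit p - iterate k p)"
      using limit_approx(2)[of "Suc k"] \<Phi>_contraction[OF admissible_iterate admissible_limit, of k]
      by (simp add: L1norm_diff_commute)
    also have "\<dots> \<le> 2 * r * (1/2)^k"
      using limit_approx(2)[of k] by simp
    finally show ?thesis .
  qed
  then have "L1norm (\<lambda>p. limit p - \<Phi> limit p) \<le> 0"
    by (intro nonpos_if_le_geometric_half[of _ "2 * r"]) (simp add: mult.assoc)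
  then show ?thesis by (rule AE_eq_if_L1norm_diff_nonpos[OF int])
qed

lemma solution_exists: "\<exists>u \<in> Xr r. AE p in lborel. \<sigma> * u p - Qcoll S A B u u p / P p = v p"
proof
  show "limit \<in> Xr r"
    using admissible_limit by (auto simp: admissible_def Xr_def)
  show "AE p in lborel. \<sigma> * limit p - Qcoll S A B limit limit p / P p = v p"
    using limit_fixed_point vplus_properties(2)
  proof eventually_elim
    case (elim p)
    have "0 < damping limit p"
      using admissible_nonneg_parts(2)[OF admissible_limit, of p] \<sigma>_ge_1 by simp
    then have "limit p * damping limit p = gain_part limit p"
      using elim(1) by (simp add: \<Phi>_def field_simps)
    then show ?case
      using elim(2) p0_pos[of A B p]
      by (simp add: Qcoll_eq gain_part_def damping_def field_simps)
  qed
qed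

end

context collision_kernel
begin

lemma unique_solution_exists:
  assumes r: "r > 0" and v: "v \<in> Xr r" and \<sigma>: "1 + 6 * kappa * r + 2 * kappa\<^sup>2 * r\<^sup>2 \<le> \<sigma>"
  shows "\<exists>u \<in> Xr r. (AE p in lborel. \<sigma> * u p - Qcoll S A B u u p / P p = v p) \<and>
    (\<forall>w \<in> Xr r. (AE p in lborel. \<sigma> * w p - Qcoll S A B w w p / P p = v p)
      \<longrightarrow> (AE p in lborel. w p = u p))"
proof -
  interpret fixed_point_problem A B C\<^sub>1 S r \<sigma> v
    by unfold_locales (fact r v \<sigma>)+
  obtain u where u: "u \<in> Xr r" "AE p in lborel. \<sigma> * u p - Qcoll S A B u u p / P p = v p"
    using solution_exists by blast
  have "0 \<le> kappa * r" "0 \<le> 2 * kappa\<^sup>2 * r\<^sup>2" using kappa_nonneg r by simp_all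
  then have "4 * kappa * r < \<sigma>" using \<sigma> by linarith
  then have "AE p in lborel. w p = u p"
    if "w \<in> Xr r" "AE p in lborel. \<sigma> * w p - Qcoll S A B w w p / P p = v p" for w
    using solution_unique[OF u(1) that(1) _ u(2) that(2)] by blast
  with u show ?thesis by blast
qed

end

theorem proposition3p2:
  fixes a b :: "real \<Rightarrow> real" and C\<^sub>o C\<^sub>1 t r :: real and S :: kernel
  assumes Co_pos: "C\<^sub>o > 0"
    and a_lb: "\<And>s. a s > C\<^sub>o" and b_lb: "\<And>s. b s > C\<^sub>o"
    and S_meas: "\<And>\<alpha> \<beta>. (\<lambda>(p, q, p', q'). S \<alpha> \<beta> p q p' q') \<in> borel_measurable borel"
    and S_nonneg: "\<And>\<alpha> \<beta> p q p' q'. 0 \<le> S \<alpha> \<beta> p q p' q'"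
    and S_bound: "\<And>\<alpha> \<beta> p q p' q'. S \<alpha> \<beta> p q p' q' \<le> C\<^sub>1"
    and S_sym: "\<And>\<alpha> \<beta> p q p' q'. S \<alpha> \<beta> p q p' q' = S \<alpha> \<beta> p' q' p q"
    and r_pos: "r > 0"
  shows "\<exists>n\<^sub>o::nat. n\<^sub>o > 0 \<and>
           (\<forall>n \<ge> n\<^sub>o. \<forall>v \<in> Xr r.
              \<exists>u \<in> Xr r. solves S (a t) (b t) n v u \<and>
                 (\<forall>w \<in> Xr r. solves S (a t) (b t) n v w \<longrightarrow> (AE p in lborel. w p = u p)))"
proof -
  interpret collision_kernel "a t" "b t" C\<^sub>1 S
    by unfold_locales (use Co_pos a_lb[of t] b_lb[of t] S_meas S_nonneg S_bound S_sym in auto)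
  define M where "M = 1 + 6 * kappa * r + 2 * kappa\<^sup>2 * r\<^sup>2"
  define n\<^sub>o where "n\<^sub>o = nat \<lceil>M\<^sup>2\<rceil> + 1"
  have M: "M \<le> sqrt (real n)" if "n\<^sub>o \<le> n" for n
  proof -
    have "M\<^sup>2 \<le> real n" using that unfolding n\<^sub>o_def by linarith
    moreover have "0 \<le> M" unfolding M_def using kappa_nonneg r_pos by simp
    ultimately show ?thesis using real_sqrt_le_mono by fastforce
  qed
  show ?thesis
  proof (intro exI[of _ n\<^sub>o] conjI allI impI ballI)
    show "0 < n\<^sub>o" by (simp add: n\<^sub>o_def)
    fix n v assume n: "n\<^sub>o \<le> n" and v: "v \<in> Xr r"
    from unique_solution_exists[OF r_pos v M[OF n, unfolded M_def]]
    show "\<exists>u \<in> Xr r. solves S (a t) (b t) n v u \<and>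
        (\<forall>w \<in> Xr r. solves S (a t) (b t) n v w \<longrightarrow> (AE p in lborel. w p = u p))"
      unfolding solves_def .
  qed
qed

end
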